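(* Let $K>1$ be an integer, $N=2K+1$, $Z\in(0,\infty)$ and $\sigma\in\{+1,-1\}$. Define the sequence $(f_k(Z))_{k\in\mathbb{Z}}$ by $f_0(Z)=1$, $f_1(Z)=1+Z$ and $f_{k+2}(Z)=(2+Z)f_{k+1}(Z)-f_k(Z)$ for all $k\in\mathbb{Z}$, and set $\lambda_k(Z)=f_{K-k}(Z)$. Let $$d(Z)=\sum_{k=0}^N\binom{N}{k}\lambda_k(Z)\ket{D_N^k}\bra{D_N^k},\qquad o(\sigma)=\sigma\left(\ket{D_N^0}\bra{D_N^N}+\ket{D_N^N}\bra{D_N^0}\right),$$ and $\rho(Z)=\dfrac{d(Z)+o(\sigma)}{2(4+Z)^K}$. Then the $N$-qubit symmetric state $\rho(Z)$ is PPT with respect to every bipartition; the ranks of $\rho(Z),\rho(Z)^{\Gamma_1},\dots,\rho(Z)^{\Gamma_K}$ are $N+1,2N,\dots,2N,2N-1$ respectively; and $\rho(Z)$ is an extreme point of the set of $N$-qubit states that are PPT with respect to every bipartition (in particular, $\rho(Z)$ is entangled, i.e. not fully separable).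
   Context: For $N$ qubits with computational basis $\{\ket0,\ket1\}$, the Dicke state $\ket{D_N^k}$ ($0\le k\le N$) is the normalized equal superposition of all computational basis vectors of $(\mathbb{C}^2)^{\otimes N}$ with exactly $k$ qubits in $\ket1$. For $0\le m\le N$, $\rho^{\Gamma_m}$ denotes the partial transpose (in the computational basis) of $\rho$ with respect to a set of $m$ of the qubits (for a permutation-symmetric state this does not depend on which $m$ qubits). A state is PPT with respect to every bipartition if its partial transpose with respect to every subset of qubits is positive semidefinite. A state is fully separable if it is a convex combination of product states $\rho^{(1)}\otimes\cdots\otimes\rho^{(N)}$; it is entangled otherwise. *)

theory Defs
  imports Complex_Main "Jordan_Normal_Form.Matrix" "Jordan_Normal_Form.DL_Rank"
begin

text \<open>N-qubit operators are complex (2^N x 2^N) matrices. The computational basis vector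
  with index i < 2^N has qubit q (q < N) in state (i div 2^q) mod 2.\<close>

definition qbit :: "nat \<Rightarrow> nat \<Rightarrow> nat" where
  "qbit i q = (i div 2 ^ q) mod 2"

definition num_ones :: "nat \<Rightarrow> nat \<Rightarrow> nat" where
  "num_ones N i = (\<Sum>q<N. qbit i q)"

definition dicke :: "nat \<Rightarrow> nat \<Rightarrow> complex vec" where
  "dicke N k = vec (2 ^ N) (\<lambda>i. if num_ones N i = k then complex_of_real (1 / sqrt (real (N choose k))) else 0)"

definition ketbra :: "complex vec \<Rightarrow> complex vec \<Rightarrow> complex mat" where
  "ketbra u v = mat (dim_vec u) (dim_vec v) (\<lambda>(i, j). u $ i * cnj (v $ j))"

definition msum :: "nat \<Rightarrow> ('b \<Rightarrow> complex mat) \<Rightarrow> 'b set \<Rightarrow> complex mat" where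
  "msum n f I = mat n n (\<lambda>(i, j). \<Sum>x\<in>I. f x $$ (i, j))"

definition psd :: "nat \<Rightarrow> complex mat \<Rightarrow> bool" where
  "psd n A \<longleftrightarrow> A \<in> carrier_mat n n \<and>
     (\<forall>v\<in>carrier_vec n. Im ((A *\<^sub>v v) \<bullet>c v) = 0 \<and> Re ((A *\<^sub>v v) \<bullet>c v) \<ge> 0)"

definition mtrace :: "complex mat \<Rightarrow> complex" where
  "mtrace A = (\<Sum>i<dim_row A. A $$ (i, i))"

definition density :: "nat \<Rightarrow> complex mat \<Rightarrow> bool" where
  "density n A \<longleftrightarrow> psd n A \<and> mtrace A = 1"

definition pt_index :: "nat \<Rightarrow> nat set \<Rightarrow> nat \<Rightarrow> nat \<Rightarrow> nat" where
  "pt_index N M i j = (\<Sum>q<N. 2 ^ q * (if q \<in> M then qbit j q else qbit i q))"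

definition ptrans :: "nat \<Rightarrow> nat set \<Rightarrow> complex mat \<Rightarrow> complex mat" where
  "ptrans N M A = mat (2 ^ N) (2 ^ N) (\<lambda>(i, j). A $$ (pt_index N M i j, pt_index N M j i))"

definition ppt_all :: "nat \<Rightarrow> complex mat \<Rightarrow> bool" where
  "ppt_all N A \<longleftrightarrow> (\<forall>M. M \<subseteq> {..<N} \<longrightarrow> psd (2 ^ N) (ptrans N M A))"

definition ppt_states :: "nat \<Rightarrow> complex mat set" where
  "ppt_states N = {A. density (2 ^ N) A \<and> ppt_all N A}"

definition extreme_point_mat :: "complex mat \<Rightarrow> complex mat set \<Rightarrow> bool" where
  "extreme_point_mat x S \<longleftrightarrow> x \<in> S \<and>
     (\<forall>a\<in>S. \<forall>b\<in>S. \<forall>t::real. 0 < t \<and> t < 1 \<and>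
        x = complex_of_real t \<cdot>\<^sub>m a + complex_of_real (1 - t) \<cdot>\<^sub>m b \<longrightarrow> a = b)"

definition tensor_qubits :: "nat \<Rightarrow> (nat \<Rightarrow> complex mat) \<Rightarrow> complex mat" where
  "tensor_qubits N r = mat (2 ^ N) (2 ^ N) (\<lambda>(i, j). \<Prod>q<N. r q $$ (qbit i q, qbit j q))"

definition fully_separable :: "nat \<Rightarrow> complex mat \<Rightarrow> bool" where
  "fully_separable N A \<longleftrightarrow> (\<exists>(n::nat) (p::nat \<Rightarrow> real) (r::nat \<Rightarrow> nat \<Rightarrow> complex mat).
     (\<forall>l<n. p l \<ge> 0) \<and> (\<Sum>l<n. p l) = 1 \<and>
     (\<forall>l<n. \<forall>q<N. density 2 (r l q)) \<and>
     A = msum (2 ^ N) (\<lambda>l. complex_of_real (p l) \<cdot>\<^sub>m tensor_qubits N (r l)) {..<n})"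

definition mrank :: "nat \<Rightarrow> complex mat \<Rightarrow> nat" where
  "mrank n A = vec_space.rank n A"

end

theory Submission
  imports Defs
begin

text \<open>The entries of \<open>\<rho>\<close> depend only on the Hamming weights of the basis indices, and \<open>f\<close> is a sum
  of two exponentials. Every partial transpose is block diagonal in the imbalance of a basis vector
  across the cut; each block is a sum of two Gram matrices, one for each exponential in \<open>f\<close>, except for
  the two extreme classes, which the corner entries couple and where \<open>f \<ge> 1 = \<bar>\<sigma>\<bar>\<close> keeps the
  \<open>2 \<times> 2\<close> block positive. Counting the blocks gives the ranks. A PPT state in a decomposition of \<open>\<rho>\<close>
  inherits all kernel vectors of the partial transposes of \<open>\<rho>\<close>; these force it to satisfy the same
  symmetries, recurrence and corner couplings as \<open>\<rho>\<close>, hence to equal \<open>\<rho>\<close>. A product decomposition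
  would give weights \<open>K - 1\<close> and \<open>K\<close> the same diagonal entries, but \<open>f 1 \<noteq> f 0\<close>.\<close>

section \<open>Binary digits of basis indices\<close>

definition nat_of_bits :: "nat \<Rightarrow> (nat \<Rightarrow> nat) \<Rightarrow> nat" where
  "nat_of_bits N c = (\<Sum>q<N. 2 ^ q * c q)"

lemma qbit_le_1: "qbit i q \<le> 1"
  unfolding qbit_def by simp

lemma qbit_le_Suc_0 [simp]: "qbit i q \<le> Suc 0"
  unfolding qbit_def by simp

lemma qbit_eq_bit: "qbit i q = (if bit i q then 1 else 0)"
  unfolding qbit_def bit_nat_def by (simp add: odd_iff_mod_2_eq_one)

lemma qbit_Suc: "qbit i (Suc q) = qbit (i div 2) q"
  unfolding qbit_def by (simp add: power_Suc div_mult2_eq)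

lemma nat_of_bits_Suc: "nat_of_bits (Suc N) c = nat_of_bits N c + 2 ^ N * c N"
  unfolding nat_of_bits_def by simp

lemma nat_of_bits_less:
  assumes "\<And>q. c q \<le> 1"
  shows "nat_of_bits N c < 2 ^ N"
proof (induction N)
  case 0
  then show ?case by (simp add: nat_of_bits_def)
next
  case (Suc N)
  have "2 ^ N * c N \<le> 2 ^ N"
    using assms[of N] by simp
  then have "nat_of_bits N c + 2 ^ N * c N < 2 ^ N + 2 ^ N"
    using Suc by linarith
  then show ?case
    by (simp add: nat_of_bits_Suc)
qed

lemma qbit_nat_of_bits:
  assumes bits: "\<And>q. c q \<le> 1" and "q < N"
  shows "qbit (nat_of_bits N c) q = c q"
  using \<open>q < N\<close>
proof (induction N)
  case 0
  then show ?case by simp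
next
  case (Suc N)
  have low: "nat_of_bits N c < 2 ^ N"
    using nat_of_bits_less bits by blast
  show ?case
  proof (cases "q < N")
    case True
    have split: "2 ^ N * c N = 2 ^ q * (2 ^ (N - q) * c N)"
      using True by (simp add: power_add[symmetric])
    obtain z where z: "2 ^ (N - q) * c N = 2 * z"
      using True by (metis dvd_mult2 dvd_power dvd_triv_left zero_less_diff dvdE)
    have "(nat_of_bits N c + 2 ^ N * c N) div 2 ^ q = nat_of_bits N c div 2 ^ q + 2 * z"
      unfolding split z by simp
    then have "qbit (nat_of_bits N c + 2 ^ N * c N) q = qbit (nat_of_bits N c) q"
      unfolding qbit_def by simp
    then show ?thesis
      using Suc True by (simp add: nat_of_bits_Suc)
  next
    case False
    then have "q = N"
      using Suc by simp
    moreover have "c N < 2"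
      using bits[of N] by simp
    ultimately show ?thesis
      using low unfolding qbit_def nat_of_bits_Suc by simp
  qed
qed

lemma nat_of_bits_qbit:
  assumes "i < 2 ^ N"
  shows "nat_of_bits N (qbit i) = i"
  using assms
proof (induction N arbitrary: i)
  case 0
  then show ?case by (simp add: nat_of_bits_def)
next
  case (Suc N)
  have "nat_of_bits N (qbit i) = nat_of_bits N (qbit (i mod 2 ^ N))"
    unfolding nat_of_bits_def
    by (intro sum.cong refl) (simp add: qbit_eq_bit bit_take_bit_iff flip: take_bit_eq_mod)
  also have "\<dots> = i mod 2 ^ N"
    using Suc.IH by simp
  finally have "nat_of_bits N (qbit i) = i mod 2 ^ N" .
  moreover have "qbit i N = i div 2 ^ N"
    unfolding qbit_def using Suc.prems by (simp add: less_mult_imp_div_less)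
  ultimately show ?case
    by (simp add: nat_of_bits_Suc mod_mult_div_eq)
qed

lemma num_ones_le: "num_ones N i \<le> N"
proof -
  have "num_ones N i \<le> (\<Sum>q<N. 1)"
    unfolding num_ones_def by (rule sum_mono) simp
  then show ?thesis by simp
qed

lemma num_ones_Suc: "num_ones (Suc N) i = qbit i 0 + num_ones N (i div 2)"
  unfolding num_ones_def sum.lessThan_Suc_shift qbit_Suc ..

lemma sum_lessThan_pow2_Suc:
  fixes h :: "nat \<Rightarrow> 'a::comm_monoid_add"
  shows "(\<Sum>i<2 ^ Suc N. h i) = (\<Sum>i<2 ^ N. h (2 * i) + h (2 * i + 1))"
proof -
  have "(\<Sum>i<2 * M. h i) = (\<Sum>i<M. h (2 * i) + h (2 * i + 1))" for M
    by (induction M) (simp_all add: ac_simps)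
  then show ?thesis
    by (simp add: power_Suc)
qed

lemma sum_num_ones_eq_binomial_sum:
  fixes g :: "nat \<Rightarrow> real"
  shows "(\<Sum>i<2 ^ N. g (num_ones N i)) = (\<Sum>k\<le>N. real (N choose k) * g k)"
proof (induction N arbitrary: g)
  case 0
  then show ?case by (simp add: num_ones_def)
next
  case (Suc N)
  have digit: "num_ones (Suc N) (2 * i + b) = b + num_ones N i" if "b < 2" for i b
    using that by (simp add: num_ones_Suc qbit_def)
  have "(\<Sum>i<2 ^ Suc N. g (num_ones (Suc N) i))
      = (\<Sum>i<2 ^ N. g (num_ones N i) + g (Suc (num_ones N i)))"
    unfolding sum_lessThan_pow2_Suc using digit[of 0] digit[of 1] by simp
  also have "\<dots> = (\<Sum>k\<le>N. real (N choose k) * g k) + (\<Sum>k\<le>N. real (N choose k) * g (Suc k))"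
    unfolding sum.distrib using Suc.IH[of g] Suc.IH[of "\<lambda>k. g (Suc k)"] by simp
  also have "\<dots> = (\<Sum>k\<le>Suc N. real (Suc N choose k) * g k)"
  proof -
    have "(\<Sum>k\<le>Suc N. real (Suc N choose k) * g k)
        = g 0 + (\<Sum>k\<le>N. real (Suc N choose Suc k) * g (Suc k))"
      by (subst sum.atMost_Suc_shift) simp
    moreover have "(\<Sum>k\<le>N. real (N choose k) * g k) = g 0 + (\<Sum>k\<le>N. real (N choose Suc k) * g (Suc k))"
    proof -
      have "(\<Sum>k\<le>Suc N. real (N choose k) * g k) = g 0 + (\<Sum>k\<le>N. real (N choose Suc k) * g (Suc k))"
        by (subst sum.atMost_Suc_shift) simp
      then show ?thesis by (simp add: binomial_eq_0)
    qed
    ultimately show ?thesis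
      by (simp add: sum.distrib algebra_simps)
  qed
  finally show ?case .
qed

definition ones_in :: "nat \<Rightarrow> nat set \<Rightarrow> nat \<Rightarrow> nat" where
  "ones_in N M i = (\<Sum>q<N. if q \<in> M then qbit i q else 0)"

definition ones_out :: "nat \<Rightarrow> nat set \<Rightarrow> nat \<Rightarrow> nat" where
  "ones_out N M i = (\<Sum>q<N. if q \<in> M then 0 else qbit i q)"

definition card_in :: "nat \<Rightarrow> nat set \<Rightarrow> nat" where
  "card_in N M = (\<Sum>q<N. if q \<in> M then 1 else 0)"

lemma num_ones_eq_ones_in_plus_out: "num_ones N i = ones_in N M i + ones_out N M i"
  unfolding num_ones_def ones_in_def ones_out_def sum.distrib[symmetric] by (intro sum.cong) auto

lemma ones_in_le: "ones_in N M i \<le> card_in N M"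
  unfolding ones_in_def card_in_def by (rule sum_mono) simp

lemma ones_out_le: "ones_out N M i \<le> N - card_in N M"
proof -
  have "ones_out N M i \<le> (\<Sum>q<N. if q \<in> M then 0 else 1)"
    unfolding ones_out_def by (rule sum_mono) simp
  moreover have "(\<Sum>q<N. if q \<in> M then 0 else 1) + card_in N M = N"
    unfolding card_in_def sum.distrib[symmetric] by (simp add: if_distrib cong: if_cong)
  ultimately show ?thesis by linarith
qed

lemma card_in_le: "card_in N M \<le> N"
proof -
  have "card_in N M \<le> (\<Sum>q<N. 1)"
    unfolding card_in_def by (rule sum_mono) simp
  then show ?thesis by simp
qed

lemma count_interval: "lo \<le> hi \<Longrightarrow> (\<Sum>q<N. if lo \<le> q \<and> q < hi then 1 else 0) = min hi N - min lo (N::nat)"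
  by (induction N) auto

lemma card_in_lessThan: "m \<le> N \<Longrightarrow> card_in N {..<m} = m"
  unfolding card_in_def using count_interval[of 0 m N] by simp

lemma pt_index_eq_nat_of_bits:
  "pt_index N M i j = nat_of_bits N (\<lambda>q. if q \<in> M then qbit j q else qbit i q)"
  unfolding pt_index_def nat_of_bits_def by simp

lemma pt_index_less: "pt_index N M i j < 2 ^ N"
  unfolding pt_index_eq_nat_of_bits by (rule nat_of_bits_less) simp

lemma qbit_pt_index: "q < N \<Longrightarrow> qbit (pt_index N M i j) q = (if q \<in> M then qbit j q else qbit i q)"
  unfolding pt_index_eq_nat_of_bits by (subst qbit_nat_of_bits) auto

lemma num_ones_pt_index: "num_ones N (pt_index N M i j) = ones_in N M j + ones_out N M i"
proof -
  have "num_ones N (pt_index N M i j) = (\<Sum>q<N. if q \<in> M then qbit j q else qbit i q)"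
    unfolding num_ones_def by (intro sum.cong) (auto simp: qbit_pt_index)
  also have "\<dots> = ones_in N M j + ones_out N M i"
    unfolding ones_in_def ones_out_def sum.distrib[symmetric] by (intro sum.cong) auto
  finally show ?thesis .
qed

lemma pt_index_empty: "i < 2 ^ N \<Longrightarrow> pt_index N {} i j = i"
  using nat_of_bits_qbit unfolding pt_index_eq_nat_of_bits by simp

lemma pt_index_all: "j < 2 ^ N \<Longrightarrow> pt_index N {..<N} i j = j"
proof -
  assume "j < 2 ^ N"
  moreover have "pt_index N {..<N} i j = nat_of_bits N (qbit j)"
    unfolding pt_index_eq_nat_of_bits nat_of_bits_def by (intro sum.cong) auto
  ultimately show ?thesis
    using nat_of_bits_qbit by simp
qed

text \<open>For \<open>p \<le> m\<close> this index has \<open>p\<close> ones in \<open>{..<m}\<close> and \<open>a\<close> ones outside: a representative for every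
  pair of counts.\<close>

definition block_index :: "nat \<Rightarrow> nat \<Rightarrow> nat \<Rightarrow> nat \<Rightarrow> nat" where
  "block_index N m p a = nat_of_bits N (\<lambda>q. if q < p \<or> (m \<le> q \<and> q < m + a) then 1 else 0)"

lemma block_index_less: "block_index N m p a < 2 ^ N"
  unfolding block_index_def by (rule nat_of_bits_less) simp

lemma qbit_block_index:
  "q < N \<Longrightarrow> qbit (block_index N m p a) q = (if q < p \<or> (m \<le> q \<and> q < m + a) then 1 else 0)"
  unfolding block_index_def by (rule qbit_nat_of_bits) auto

lemma ones_in_block_index:
  assumes "p \<le> m" "m \<le> N"
  shows "ones_in N {..<m} (block_index N m p a) = p"
proof -
  have "ones_in N {..<m} (block_index N m p a) = (\<Sum>q<N. if 0 \<le> q \<and> q < p then 1 else 0)"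
    unfolding ones_in_def using assms by (intro sum.cong) (auto simp: qbit_block_index)
  also have "\<dots> = p"
    using count_interval[of 0 p N] assms by simp
  finally show ?thesis .
qed

lemma ones_out_block_index:
  assumes "p \<le> m" "m + a \<le> N"
  shows "ones_out N {..<m} (block_index N m p a) = a"
proof -
  have "ones_out N {..<m} (block_index N m p a) = (\<Sum>q<N. if m \<le> q \<and> q < m + a then 1 else 0)"
    unfolding ones_out_def using assms by (intro sum.cong) (auto simp: qbit_block_index)
  also have "\<dots> = a"
    using count_interval[of m "m + a" N] assms by simp
  finally show ?thesis .
qed

lemma num_ones_block_index:
  assumes "p \<le> m" "m + a \<le> N"
  shows "num_ones N (block_index N m p a) = p + a"
  using num_ones_eq_ones_in_plus_out[of N _ "{..<m}"] ones_in_block_index[of p m N]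
    ones_out_block_index[OF assms] assms by simp

lemma num_ones_block_index_weight: "k \<le> N \<Longrightarrow> num_ones N (block_index N N k 0) = k"
  using num_ones_block_index[of k N 0 N] by simp


section \<open>Quadratic forms, positive semidefiniteness and rank\<close>

lemma conjugate_complex_eq_cnj: "conjugate (z::complex) = cnj z"
  by (simp add: conjugate_complex_def)

lemma quadratic_form_eq_double_sum:
  fixes A :: "complex mat"
  assumes "A \<in> carrier_mat n n" "v \<in> carrier_vec n"
  shows "(A *\<^sub>v v) \<bullet>c v = (\<Sum>i<n. \<Sum>j<n. A $$ (i, j) * v $ j * cnj (v $ i))"
  using assms
  by (auto simp: scalar_prod_def mult_mat_vec_def conjugate_complex_eq_cnj sum_distrib_right
      atLeast0LessThan intro!: sum.cong)

lemma index_mult_mat_vec_eq_sum: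
  fixes A :: "complex mat"
  assumes "A \<in> carrier_mat n n" "v \<in> carrier_vec n" "l < n"
  shows "(A *\<^sub>v v) $ l = (\<Sum>j<n. A $$ (l, j) * v $ j)"
  using assms by (auto simp: scalar_prod_def mult_mat_vec_def atLeast0LessThan intro!: sum.cong)

lemma sum_eq_two_terms:
  fixes g :: "nat \<Rightarrow> 'a::comm_monoid_add"
  assumes "a < r" "b < r" "a \<noteq> b" "\<And>k. k < r \<Longrightarrow> k \<noteq> a \<Longrightarrow> k \<noteq> b \<Longrightarrow> g k = 0"
  shows "(\<Sum>k<r. g k) = g a + g b"
proof -
  have "(\<Sum>k<r. g k) = (\<Sum>k\<in>{a, b}. g k)"
    by (rule sum.mono_neutral_right) (use assms in auto)
  then show ?thesis
    using assms(3) by simp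
qed

lemma sum_eq_single_term:
  fixes g :: "nat \<Rightarrow> 'a::comm_monoid_add"
  assumes "a < r" "\<And>k. k < r \<Longrightarrow> k \<noteq> a \<Longrightarrow> g k = 0"
  shows "(\<Sum>k<r. g k) = g a"
  using sum_eq_two_terms[of a r "if a = 0 then 1 else 0" g] assms
  by (cases "r = 1") (auto simp: sum.lessThan_Suc intro: sum.neutral)

lemma sum_lessThan_2: "(\<Sum>k<2. g k) = g 0 + g (1::nat)"
  by (simp add: numeral_2_eq_2)

lemma sum_lessThan_3: "(\<Sum>k<3. g k) = g 0 + g 1 + g (2::nat)"
  by (simp add: numeral_3_eq_3 numeral_2_eq_2)

lemma sum_ge_two_terms:
  fixes g :: "'a \<Rightarrow> real"
  assumes "finite D" "a \<in> D" "b \<in> D" "a \<noteq> b" "\<And>x. g x \<ge> 0"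
  shows "g a + g b \<le> sum g D"
proof -
  have "sum g D = g a + g b + sum g (D - {a} - {b})"
    using assms by (simp add: sum.remove)
  then show ?thesis
    using assms by (simp add: sum_nonneg)
qed

lemma double_sum_indicator_product:
  fixes v :: "nat \<Rightarrow> complex"
  assumes "finite I"
  shows "(\<Sum>i\<in>I. \<Sum>j\<in>I. if P i \<and> Q j then v j * cnj (v i) else 0)
    = cnj (\<Sum>i\<in>{i\<in>I. P i}. v i) * (\<Sum>j\<in>{j\<in>I. Q j}. v j)"
proof -
  have "(\<Sum>i\<in>I. \<Sum>j\<in>I. if P i \<and> Q j then v j * cnj (v i) else 0)
      = (\<Sum>i\<in>I. if P i then cnj (v i) * (\<Sum>j\<in>{j\<in>I. Q j}. v j) else 0)"
    using assms
    by (intro sum.cong refl) (auto simp: sum.inter_filter[symmetric] sum_distrib_left mult.commute)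
  also have "\<dots> = cnj (\<Sum>i\<in>{i\<in>I. P i}. v i) * (\<Sum>j\<in>{j\<in>I. Q j}. v j)"
    using assms by (simp add: sum.inter_filter[symmetric] sum_distrib_right)
  finally show ?thesis .
qed

lemma double_sum_same_class_eq_sum_cmod_sq:
  fixes h :: "nat \<Rightarrow> int" and x :: "nat \<Rightarrow> complex"
  assumes fD: "finite D" and hD: "h ` I \<subseteq> D" and fI: "finite I"
  shows "(\<Sum>i\<in>I. \<Sum>j\<in>I. if h i = h j then x j * cnj (x i) else 0)
       = (\<Sum>\<delta>\<in>D. complex_of_real ((cmod (\<Sum>i\<in>{i\<in>I. h i = \<delta>}. x i))\<^sup>2))"
proof -
  define S where "S \<delta> = (\<Sum>i\<in>{i\<in>I. h i = \<delta>}. x i)" for \<delta>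
  have "(\<Sum>i\<in>I. \<Sum>j\<in>I. if h i = h j then x j * cnj (x i) else 0) = (\<Sum>i\<in>I. cnj (x i) * S (h i))"
  proof (rule sum.cong[OF refl])
    fix i
    have "(\<Sum>j\<in>I. if h i = h j then x j * cnj (x i) else 0) = (\<Sum>j\<in>{j\<in>I. h j = h i}. x j * cnj (x i))"
      using fI by (subst sum.inter_filter) (auto intro!: sum.cong)
    then show "(\<Sum>j\<in>I. if h i = h j then x j * cnj (x i) else 0) = cnj (x i) * S (h i)"
      unfolding S_def by (simp add: sum_distrib_left mult.commute)
  qed
  also have "\<dots> = (\<Sum>\<delta>\<in>D. \<Sum>i\<in>{i. i \<in> I \<and> h i = \<delta>}. cnj (x i) * S (h i))"
    by (rule sum.group[OF fI fD hD, symmetric])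
  also have "\<dots> = (\<Sum>\<delta>\<in>D. S \<delta> * cnj (S \<delta>))"
  proof (rule sum.cong[OF refl])
    fix \<delta>
    have "(\<Sum>i\<in>{i. i \<in> I \<and> h i = \<delta>}. cnj (x i) * S (h i))
        = (\<Sum>i\<in>{i. i \<in> I \<and> h i = \<delta>}. cnj (x i)) * S \<delta>"
      by (simp add: sum_distrib_right)
    then show "(\<Sum>i\<in>{i. i \<in> I \<and> h i = \<delta>}. cnj (x i) * S (h i)) = S \<delta> * cnj (S \<delta>)"
      unfolding S_def by (simp add: mult.commute)
  qed
  also have "\<dots> = (\<Sum>\<delta>\<in>D. complex_of_real ((cmod (S \<delta>))\<^sup>2))"
    by (simp only: complex_norm_square)
  finally show ?thesis
    unfolding S_def .
qed

lemma sum_indicator_product: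
  fixes x y :: complex and h :: "nat \<Rightarrow> int"
  assumes "finite D"
  shows "(\<Sum>\<delta>\<in>D. (if h i = \<delta> then x else 0) * (if h j = \<delta> then y else 0))
    = (if h i = h j \<and> h i \<in> D then x * y else 0)"
proof -
  have "(\<Sum>\<delta>\<in>D. (if h i = \<delta> then x else 0) * (if h j = \<delta> then y else 0))
      = (\<Sum>\<delta>\<in>D. if h i = \<delta> then (if h j = h i then x * y else 0) else 0)"
    by (intro sum.cong refl) auto
  then show ?thesis
    using assms by (simp add: sum.delta)
qed

lemma linear_system_2_unique_solution:
  fixes a b c d x y :: complex
  assumes "a * x + b * y = 0" "c * x + d * y = 0" "a * d - b * c \<noteq> 0"
  shows "x = 0 \<and> y = 0"
proof -
  have "(a * d - b * c) * x = d * (a * x + b * y) - b * (c * x + d * y)"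
    "(a * d - b * c) * y = a * (c * x + d * y) - c * (a * x + b * y)"
    by (simp_all add: algebra_simps)
  then show ?thesis
    using assms by simp
qed

lemma quadratic_form_add_smult:
  fixes X :: "complex mat" and v w :: "nat \<Rightarrow> complex"
  shows "(\<Sum>i<n. \<Sum>j<n. X $$ (i, j) * (v j + z * w j) * cnj (v i + z * w i))
    = (\<Sum>i<n. \<Sum>j<n. X $$ (i, j) * v j * cnj (v i))
      + z * (\<Sum>i<n. \<Sum>j<n. X $$ (i, j) * w j * cnj (v i))
      + cnj z * (\<Sum>i<n. \<Sum>j<n. X $$ (i, j) * v j * cnj (w i))
      + z * cnj z * (\<Sum>i<n. \<Sum>j<n. X $$ (i, j) * w j * cnj (w i))"
proof -
  have "X $$ (i, j) * (v j + z * w j) * cnj (v i + z * w i)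
     = X $$ (i, j) * v j * cnj (v i) + z * (X $$ (i, j) * w j * cnj (v i))
       + cnj z * (X $$ (i, j) * v j * cnj (w i)) + z * cnj z * (X $$ (i, j) * w j * cnj (w i))" for i j
    by (simp add: algebra_simps)
  then show ?thesis
    by (simp add: sum.distrib sum_distrib_left)
qed

lemma nonneg_quadratic_imp_linear_zero:
  fixes q r :: real
  assumes "q \<ge> 0" "r \<ge> 0" and quadratic: "\<And>t. t * (t * q - 2 * r) \<ge> 0"
  shows "r = 0"
proof (rule ccontr)
  assume "r \<noteq> 0"
  then have r: "r > 0"
    using assms by simp
  define t where "t = r / (q + 1)"
  have t: "t > 0"
    unfolding t_def using r assms by simp
  then have "t * q \<ge> 2 * r"
    using quadratic[of t] by (simp add: zero_le_mult_iff)
  moreover have "t * q = r * (q / (q + 1))"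
    unfolding t_def using assms by simp
  moreover have "r * (q / (q + 1)) < r * 1"
    using r assms by (intro mult_strict_left_mono) auto
  ultimately show False
    using r by simp
qed

text \<open>A vector \<open>v\<close> with \<open>v\<^sup>* X v = 0\<close> is in the kernel of a positive semidefinite \<open>X\<close>: the quadratic
  form at \<open>v - t X v\<close> would be negative for a small \<open>t > 0\<close> otherwise.\<close>

lemma psd_quadratic_form_zero_imp_kernel:
  fixes X :: "complex mat"
  assumes X: "psd n X" and v: "v \<in> carrier_vec n" and q0: "(X *\<^sub>v v) \<bullet>c v = 0"
  shows "X *\<^sub>v v = 0\<^sub>v n"
proof -
  have Xc: "X \<in> carrier_mat n n"
    using X unfolding psd_def by simp
  define Q where "Q u = (\<Sum>i<n. \<Sum>j<n. X $$ (i, j) * u j * cnj (u i))" for u :: "nat \<Rightarrow> complex"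
  have Q_nonneg: "Im (Q u) = 0 \<and> Re (Q u) \<ge> 0" for u
  proof -
    have "(X *\<^sub>v vec n u) \<bullet>c vec n u = Q u"
      unfolding quadratic_form_eq_double_sum[OF Xc vec_carrier] Q_def by (intro sum.cong refl) simp
    then show ?thesis
      using X vec_carrier unfolding psd_def by metis
  qed
  define vf where "vf i = v $ i" for i
  define wf where "wf i = (X *\<^sub>v v) $ i" for i
  define c where "c = (\<Sum>i<n. \<Sum>j<n. X $$ (i, j) * wf j * cnj (vf i))"
  define r where "r = (\<Sum>i<n. (cmod (wf i))\<^sup>2)"
  have Qv: "Q vf = 0"
    using q0 unfolding Q_def vf_def quadratic_form_eq_double_sum[OF Xc v, symmetric] .
  have cross: "(\<Sum>i<n. \<Sum>j<n. X $$ (i, j) * vf j * cnj (wf i)) = complex_of_real r"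
  proof -
    have "wf i = (\<Sum>j<n. X $$ (i, j) * vf j)" if "i < n" for i
      unfolding wf_def vf_def using index_mult_mat_vec_eq_sum[OF Xc v that] .
    then have "(\<Sum>i<n. \<Sum>j<n. X $$ (i, j) * vf j * cnj (wf i)) = (\<Sum>i<n. wf i * cnj (wf i))"
      by (auto simp: sum_distrib_right intro!: sum.cong)
    then show ?thesis
      unfolding r_def of_real_sum by (simp only: complex_norm_square)
  qed
  have r0: "r \<ge> 0"
    unfolding r_def by (simp add: sum_nonneg)
  have qw: "Im (Q wf) = 0" "Re (Q wf) \<ge> 0"
    using Q_nonneg[of wf] by auto
  have expand: "Q (\<lambda>i. vf i + z * wf i) = z * c + cnj z * complex_of_real r + z * cnj z * Q wf" for z
    using quadratic_form_add_smult[where X = X and n = n and v = vf and z = z and w = wf] unfolding Q_def[symmetric] c_def[symmetric] cross Qv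
    by (simp add: Q_def)
  have "Im (Q (\<lambda>i. vf i + \<i> * wf i)) = 0"
    using Q_nonneg by blast
  then have Re_c: "Re c = r"
    unfolding expand using qw by simp
  have "r = 0"
  proof (rule nonneg_quadratic_imp_linear_zero[OF qw(2) r0])
    fix t :: real
    have "Re (Q (\<lambda>i. vf i + complex_of_real (- t) * wf i)) \<ge> 0"
      using Q_nonneg by blast
    then show "t * (t * Re (Q wf) - 2 * r) \<ge> 0"
      unfolding expand using Re_c by (simp add: algebra_simps)
  qed
  then have "\<forall>i\<in>{..<n}. (cmod (wf i))\<^sup>2 = 0"
    unfolding r_def by (subst sum_nonneg_eq_0_iff[symmetric]) auto
  then show ?thesis
    using Xc v unfolding wf_def by (intro eq_vecI) auto
qed

definition sparse_vec :: "nat \<Rightarrow> nat \<Rightarrow> (nat \<Rightarrow> nat) \<Rightarrow> (nat \<Rightarrow> complex) \<Rightarrow> complex vec" where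
  "sparse_vec n r a c = vec n (\<lambda>i. \<Sum>k<r. if a k = i then c k else 0)"

lemma index_mult_mat_sparse_vec:
  fixes X :: "complex mat"
  assumes X: "X \<in> carrier_mat n n" and a: "\<And>k. k < r \<Longrightarrow> a k < n" and l: "l < n"
  shows "(X *\<^sub>v sparse_vec n r a c) $ l = (\<Sum>k<r. X $$ (l, a k) * c k)"
proof -
  have "(X *\<^sub>v sparse_vec n r a c) $ l = (\<Sum>j<n. \<Sum>k<r. if a k = j then X $$ (l, j) * c k else 0)"
    using index_mult_mat_vec_eq_sum[OF X _ l, of "sparse_vec n r a c"] unfolding sparse_vec_def
    by (auto simp: sum_distrib_left intro!: sum.cong)
  also have "\<dots> = (\<Sum>k<r. \<Sum>j<n. if a k = j then X $$ (l, j) * c k else 0)"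
    by (rule sum.swap)
  also have "\<dots> = (\<Sum>k<r. X $$ (l, a k) * c k)"
    using a by (intro sum.cong refl) (simp add: sum.delta)
  finally show ?thesis .
qed

lemma quadratic_form_sparse_vec:
  fixes X :: "complex mat"
  assumes X: "X \<in> carrier_mat n n" and a: "\<And>k. k < r \<Longrightarrow> a k < n"
  shows "(X *\<^sub>v sparse_vec n r a c) \<bullet>c sparse_vec n r a c
    = (\<Sum>k'<r. \<Sum>k<r. X $$ (a k', a k) * c k * cnj (c k'))"
proof -
  define u where "u = X *\<^sub>v sparse_vec n r a c"
  have "u \<bullet>c sparse_vec n r a c = (\<Sum>i<n. \<Sum>k'<r. if a k' = i then u $ i * cnj (c k') else 0)"
    using X unfolding u_def
    by (auto simp: scalar_prod_def conjugate_complex_eq_cnj atLeast0LessThan sparse_vec_def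
        sum_distrib_left intro!: sum.cong)
  also have "\<dots> = (\<Sum>k'<r. \<Sum>i<n. if a k' = i then u $ i * cnj (c k') else 0)"
    by (rule sum.swap)
  also have "\<dots> = (\<Sum>k'<r. (\<Sum>k<r. X $$ (a k', a k) * c k) * cnj (c k'))"
    unfolding u_def using a by (intro sum.cong refl) (simp add: sum.delta index_mult_mat_sparse_vec[OF X a])
  finally show ?thesis
    unfolding u_def by (simp add: sum_distrib_right)
qed

lemma rank_le_card_sum_outer_products:
  fixes fv gv :: "'b \<Rightarrow> nat \<Rightarrow> complex"
  assumes "finite T"
  shows "vec_space.rank n (mat n n (\<lambda>(i, j). \<Sum>t\<in>T. fv t i * gv t j)) \<le> card T"
  using assms
proof (induction T rule: finite_induct)
  case empty
  have "mat n n (\<lambda>(i, j). \<Sum>t\<in>{}. fv t i * gv t j) = 0\<^sub>m n n"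
    by (rule eq_matI) auto
  then show ?case
    using vec_space.rank_0I by (metis card.empty le_refl)
next
  case (insert t T)
  define A1 where "A1 = mat n n (\<lambda>(i, j). fv t i * gv t j)"
  define A2 where "A2 = mat n n (\<lambda>(i, j). \<Sum>t\<in>T. fv t i * gv t j)"
  have "mat n n (\<lambda>(i, j). \<Sum>t\<in>insert t T. fv t i * gv t j) = A1 + A2"
    unfolding A1_def A2_def by (rule eq_matI) (use insert in auto)
  moreover have "vec_space.rank n A1 \<le> 1"
    by (rule vec_space.rank_le_1_product_entries[where f = "fv t" and g = "gv t" and nc = n])
      (auto simp: A1_def)
  moreover have "vec_space.rank n (A1 + A2) \<le> vec_space.rank n A1 + vec_space.rank n A2"
    by (rule vec_space.rank_subadditive) (auto simp: A1_def A2_def)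
  ultimately show ?case
    using insert A2_def by simp
qed

lemma rank_le_card_of_entries_sum_outer_products:
  fixes X :: "complex mat" and fv gv :: "'b \<Rightarrow> nat \<Rightarrow> complex"
  assumes "X \<in> carrier_mat n n" "finite T"
    and "\<And>i j. i < n \<Longrightarrow> j < n \<Longrightarrow> X $$ (i, j) = (\<Sum>t\<in>T. fv t i * gv t j)"
  shows "vec_space.rank n X \<le> card T"
proof -
  have "X = mat n n (\<lambda>(i, j). \<Sum>t\<in>T. fv t i * gv t j)"
    by (rule eq_matI) (use assms in auto)
  then show ?thesis
    using rank_le_card_sum_outer_products[OF assms(2)] by simp
qed

lemma distinct_cols_of_trivial_kernel:
  fixes S :: "complex mat"
  assumes Sc: "S \<in> carrier_mat n r" and ker: "\<And>v. v \<in> carrier_vec r \<Longrightarrow> S *\<^sub>v v = 0\<^sub>v n \<Longrightarrow> v = 0\<^sub>v r"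
  shows "distinct (cols S)"
proof (subst distinct_conv_nth, intro allI impI)
  fix a b assume "a < length (cols S)" "b < length (cols S)" "a \<noteq> b"
  then have a: "a < r" and b: "b < r" and ab: "a \<noteq> b"
    using Sc by auto
  show "cols S ! a \<noteq> cols S ! b"
  proof
    assume eq: "cols S ! a = cols S ! b"
    define v where "v = vec r (\<lambda>k. if k = a then 1 else if k = b then - 1 else (0::complex))"
    have vc: "v \<in> carrier_vec r"
      unfolding v_def by simp
    have "S *\<^sub>v v = 0\<^sub>v n"
    proof (rule eq_vecI)
      fix i assume "i < dim_vec (0\<^sub>v n :: complex vec)"
      then have i: "i < n" by simp
      have "(S *\<^sub>v v) $ i = (\<Sum>k<r. (if k = a then S $$ (i, a) else 0) - (if k = b then S $$ (i, b) else 0))"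
        using i Sc ab unfolding v_def
        by (auto simp: mult_mat_vec_def scalar_prod_def atLeast0LessThan intro!: sum.cong)
      also have "\<dots> = S $$ (i, a) - S $$ (i, b)"
        using a b by (simp add: sum_subtractf)
      also have "\<dots> = 0"
        using eq i a b Sc by (metis cols_length cols_nth carrier_matD index_col diff_self)
      finally show "(S *\<^sub>v v) $ i = 0\<^sub>v n $ i"
        using i by simp
    qed (use Sc in simp)
    then have "v $ a = 0"
      using ker[OF vc] a by simp
    then show False
      unfolding v_def using a by simp
  qed
qed

lemma rank_ge_of_kernel_trivial:
  fixes X :: "complex mat" and \<phi> :: "nat \<Rightarrow> nat"
  assumes X: "X \<in> carrier_mat n n" and \<phi>: "\<And>k. k < r \<Longrightarrow> \<phi> k < n"
    and ker: "\<And>c. \<forall>i<n. (\<Sum>k<r. X $$ (i, \<phi> k) * c k) = 0 \<Longrightarrow> \<forall>k<r. c k = 0"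
  shows "r \<le> vec_space.rank n X"
proof -
  define S where "S = mat n r (\<lambda>(i, k). X $$ (i, \<phi> k))"
  have Sc: "S \<in> carrier_mat n r"
    unfolding S_def by simp
  have S_mult: "(S *\<^sub>v v) $ i = (\<Sum>k<r. X $$ (i, \<phi> k) * v $ k)" if "i < n" "v \<in> carrier_vec r" for i v
    using that unfolding S_def by (auto simp: mult_mat_vec_def scalar_prod_def atLeast0LessThan intro!: sum.cong)
  have kerS: "v = 0\<^sub>v r" if v: "v \<in> carrier_vec r" and Sv: "S *\<^sub>v v = 0\<^sub>v n" for v
  proof -
    have "\<forall>i<n. (\<Sum>k<r. X $$ (i, \<phi> k) * v $ k) = 0"
      using Sv S_mult[OF _ v] by (metis index_zero_vec(1))
    then show ?thesis
      using v ker by (intro eq_vecI) auto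
  qed
  have col_S: "col S k = col X (\<phi> k)" if "k < r" for k
    using that \<phi>[OF that] X Sc unfolding S_def by (intro eq_vecI) auto
  have distinct: "distinct (cols S)"
    using Sc kerS by (rule distinct_cols_of_trivial_kernel)
  have "\<not> module.lin_dep class_ring (module_vec TYPE(complex) n) (set (cols S))"
  proof
    assume "module.lin_dep class_ring (module_vec TYPE(complex) n) (set (cols S))"
    then obtain v where "v \<in> carrier_vec r" "v \<noteq> 0\<^sub>v r" "S *\<^sub>v v = 0\<^sub>v n"
      using vec_space.lin_depE[OF Sc _ distinct] by blast
    then show False
      using kerS by blast
  qed
  moreover have "set (cols S) \<subseteq> set (cols X)"
  proof
    fix w assume "w \<in> set (cols S)"
    then obtain k where k: "k < r" "w = col X (\<phi> k)"
      using Sc col_S by (auto simp: in_set_conv_nth)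
    then show "w \<in> set (cols X)"
      using nth_mem[of "\<phi> k" "cols X"] \<phi>[OF k(1)] X by simp
  qed
  moreover have "card (set (cols S)) = r"
    using distinct_card[OF distinct] Sc by simp
  ultimately show ?thesis
    using vec_space.rank_ge_card_indpt[OF X] by metis
qed


section \<open>Second-order linear recurrences\<close>

lemma int_recurrence_unique:
  fixes g h :: "int \<Rightarrow> 'a::comm_ring"
  assumes g: "\<And>k. g (k + 2) = c * g (k + 1) - g k"
    and h: "\<And>k. h (k + 2) = c * h (k + 1) - h k"
    and "g 0 = h 0" and "g 1 = h 1"
  shows "g n = h n"
proof -
  have up: "g (int m) = h (int m) \<and> g (int m + 1) = h (int m + 1)" for m
  proof (induction m)
    case 0
    then show ?case using assms by simp
  next
    case (Suc m)
    then have "g (int m + 2) = h (int m + 2)"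
      using g[of "int m"] h[of "int m"] by simp
    then show ?case
      using Suc by (simp add: add.commute add.left_commute)
  qed
  have down: "g (- int m) = h (- int m) \<and> g (- int m + 1) = h (- int m + 1)" for m
  proof (induction m)
    case 0
    then show ?case using assms by simp
  next
    case (Suc m)
    have "g (- int (Suc m)) = c * g (- int m) - g (- int m + 1)"
      "h (- int (Suc m)) = c * h (- int m) - h (- int m + 1)"
      using g[of "- int (Suc m)"] h[of "- int (Suc m)"] by (simp_all add: algebra_simps)
    moreover have "- int (Suc m) + 1 = - int m"
      by simp
    ultimately show ?case
      using Suc by simp
  qed
  show ?thesis
  proof (cases "n \<ge> 0")
    case True
    then show ?thesis using up[of "nat n"] by simp
  next
    case False
    then show ?thesis using down[of "nat (- n)"] by simp
  qed
qed

lemma int_shift_invariant_const: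
  assumes "\<And>n::int. W (n + 1) = W n"
  shows "W n = W 0"
proof -
  have up: "W (int m) = W 0" for m
  proof (induction m)
    case (Suc m)
    have "W (int m + 1) = W (int m)"
      by (rule assms)
    then show ?case
      using Suc by (simp add: add.commute)
  qed simp
  have down: "W (- int m) = W 0" for m
  proof (induction m)
    case (Suc m)
    have "W (- int (Suc m) + 1) = W (- int (Suc m))"
      by (rule assms)
    then show ?case
      using Suc by simp
  qed simp
  show ?thesis
  proof (cases "n \<ge> 0")
    case True
    then show ?thesis using up[of "nat n"] by simp
  next
    case False
    then show ?thesis using down[of "nat (- n)"] by simp
  qed
qed

lemma recurrence_on_interval_step:
  fixes h :: "nat \<Rightarrow> 'a::comm_ring"
  assumes "\<And>n. n + 2 \<le> L \<Longrightarrow> h n - c * h (n + 1) + h (n + 2) = 0" and "n + 2 \<le> L"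
  shows "h (n + 2) = c * h (n + 1) - h n" "h n = c * h (n + 1) - h (n + 2)"
  using assms by (simp_all add: algebra_simps eq_neg_iff_add_eq_0)

lemma recurrence_on_interval_unique:
  fixes h u :: "nat \<Rightarrow> 'a::comm_ring"
  assumes rh: "\<And>n. n + 2 \<le> L \<Longrightarrow> h n - c * h (n + 1) + h (n + 2) = 0"
    and ru: "\<And>n. n + 2 \<le> L \<Longrightarrow> u n - c * u (n + 1) + u (n + 2) = 0"
    and p: "p + 1 \<le> L" and e0: "h p = u p" and e1: "h (p + 1) = u (p + 1)"
    and n: "n \<le> L"
  shows "h n = u n"
proof -
  note step = recurrence_on_interval_step[OF rh] recurrence_on_interval_step[OF ru]
  have up: "p + j + 1 \<le> L \<Longrightarrow> h (p + j) = u (p + j) \<and> h (p + j + 1) = u (p + j + 1)" for j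
  proof (induction j)
    case (Suc j)
    then have "h (p + j + 2) = u (p + j + 2)"
      using step(1)[where n = "p + j"] step(3)[where n = "p + j"] by simp
    then show ?case
      using Suc by (simp add: add.assoc)
  qed (use e0 e1 in simp)
  have down: "j \<le> p \<Longrightarrow> h (p - j) = u (p - j) \<and> h (p - j + 1) = u (p - j + 1)" for j
  proof (induction j)
    case (Suc j)
    then have "p - Suc j + 2 \<le> L" "p - Suc j + 1 = p - j" "p - Suc j + 2 = p - j + 1"
      using p by auto
    then have "h (p - Suc j) = u (p - Suc j)"
      using step(2)[where n = "p - Suc j"] step(4)[where n = "p - Suc j"] Suc by simp
    then show ?case
      using Suc \<open>p - Suc j + 1 = p - j\<close> by simp
  qed (use e0 e1 in simp)
  show ?thesis
  proof (cases "n \<le> p")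
    case True
    then show ?thesis using down[of "p - n"] by simp
  next
    case False
    then show ?thesis using up[of "n - p - 1"] n by simp
  qed
qed


section \<open>Partial transposes and imbalance\<close>

lemma ptrans_carrier: "ptrans N M A \<in> carrier_mat (2 ^ N) (2 ^ N)"
  unfolding ptrans_def by simp

lemma index_ptrans:
  "i < 2 ^ N \<Longrightarrow> j < 2 ^ N \<Longrightarrow> ptrans N M A $$ (i, j) = A $$ (pt_index N M i j, pt_index N M j i)"
  unfolding ptrans_def by simp

lemma ptrans_empty: "A \<in> carrier_mat (2 ^ N) (2 ^ N) \<Longrightarrow> ptrans N {} A = A"
  by (rule eq_matI) (auto simp: ptrans_def pt_index_empty)

lemma index_ptrans_all:
  "i < 2 ^ N \<Longrightarrow> j < 2 ^ N \<Longrightarrow> ptrans N {..<N} A $$ (i, j) = A $$ (j, i)"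
  by (simp add: index_ptrans pt_index_all)

text \<open>The \<open>(i, j)\<close> entry of a partial transpose of a weight-symmetric operator is taken at the weights
  \<open>ones_in j + ones_out i\<close> and \<open>ones_in i + ones_out j\<close>, which agree exactly when \<open>i\<close> and \<open>j\<close> have the
  same imbalance.\<close>

definition imbalance :: "nat \<Rightarrow> nat set \<Rightarrow> nat \<Rightarrow> int" where
  "imbalance N M i = int (ones_out N M i) - int (ones_in N M i)"

lemma imbalance_bounds:
  "- int (card_in N M) \<le> imbalance N M i \<and> imbalance N M i \<le> int N - int (card_in N M)"
  unfolding imbalance_def using ones_in_le[of N M i] ones_out_le[of N M i] card_in_le[of N M] by auto

lemma imbalance_eq_min_iff:
  "imbalance N M i = - int (card_in N M) \<longleftrightarrow> ones_in N M i = card_in N M \<and> ones_out N M i = 0"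
  unfolding imbalance_def using ones_in_le[of N M i] by auto

lemma imbalance_eq_max_iff:
  "imbalance N M i = int N - int (card_in N M) \<longleftrightarrow> ones_in N M i = 0 \<and> ones_out N M i = N - card_in N M"
  unfolding imbalance_def using ones_out_le[of N M i] card_in_le[of N M] by auto

lemma imbalance_eq_iff:
  "imbalance N M i = imbalance N M j \<longleftrightarrow> ones_in N M j + ones_out N M i = ones_in N M i + ones_out N M j"
  unfolding imbalance_def by auto

lemma imbalance_block_index:
  "p \<le> m \<Longrightarrow> m + a \<le> N \<Longrightarrow> imbalance N {..<m} (block_index N m p a) = int a - int p"
  unfolding imbalance_def using ones_in_block_index[of p m N a] ones_out_block_index[of p m a N] by simp


text \<open>Kernel vectors of \<open>X\<^sup>\<Gamma>\<close> (given in sparse form) are kernel vectors of \<open>A\<^sup>\<Gamma>\<close>, because \<open>A\<^sup>\<Gamma>\<close> and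
  \<open>B\<^sup>\<Gamma>\<close> are positive semidefinite.\<close>

lemma ptrans_convex_combination_kernel:
  fixes r :: nat and c :: "nat \<Rightarrow> complex"
  assumes A: "A \<in> ppt_states N" and B: "B \<in> ppt_states N" and t: "0 < t" "t < 1"
    and X: "X = complex_of_real t \<cdot>\<^sub>m A + complex_of_real (1 - t) \<cdot>\<^sub>m B"
    and M: "M \<subseteq> {..<N}" and a: "\<And>k. k < r \<Longrightarrow> a k < 2 ^ N"
    and q0: "(\<Sum>k'<r. \<Sum>k<r. ptrans N M X $$ (a k', a k) * c k * cnj (c k')) = 0"
    and l: "l < 2 ^ N"
  shows "(\<Sum>k<r. ptrans N M A $$ (l, a k) * c k) = 0"
proof -
  have Ac: "A \<in> carrier_mat (2 ^ N) (2 ^ N)" and Bc: "B \<in> carrier_mat (2 ^ N) (2 ^ N)"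
    using A B unfolding ppt_states_def density_def psd_def by auto
  have pA: "psd (2 ^ N) (ptrans N M A)" and pB: "psd (2 ^ N) (ptrans N M B)"
    using A B M unfolding ppt_states_def ppt_all_def by auto
  define v where "v = sparse_vec (2 ^ N) r a c"
  have vc: "v \<in> carrier_vec (2 ^ N)"
    unfolding v_def sparse_vec_def by simp
  define qA where "qA = (\<Sum>k'<r. \<Sum>k<r. ptrans N M A $$ (a k', a k) * c k * cnj (c k'))"
  define qB where "qB = (\<Sum>k'<r. \<Sum>k<r. ptrans N M B $$ (a k', a k) * c k * cnj (c k'))"
  have qAv: "(ptrans N M A *\<^sub>v v) \<bullet>c v = qA"
    unfolding qA_def v_def by (rule quadratic_form_sparse_vec[OF ptrans_carrier a])
  have qBv: "(ptrans N M B *\<^sub>v v) \<bullet>c v = qB"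
    unfolding qB_def v_def by (rule quadratic_form_sparse_vec[OF ptrans_carrier a])
  have entry: "ptrans N M X $$ (i, j) = complex_of_real t * ptrans N M A $$ (i, j) + complex_of_real (1 - t) * ptrans N M B $$ (i, j)"
    if "i < 2 ^ N" "j < 2 ^ N" for i j
    using that pt_index_less[of N M i j] pt_index_less[of N M j i] Ac Bc unfolding index_ptrans[OF that] X by simp
  have "(\<Sum>k'<r. \<Sum>k<r. ptrans N M X $$ (a k', a k) * c k * cnj (c k'))
      = (\<Sum>k'<r. \<Sum>k<r. complex_of_real t * (ptrans N M A $$ (a k', a k) * c k * cnj (c k'))
          + complex_of_real (1 - t) * (ptrans N M B $$ (a k', a k) * c k * cnj (c k')))"
    by (intro sum.cong refl) (simp add: entry a algebra_simps)
  also have "\<dots> = complex_of_real t * qA + complex_of_real (1 - t) * qB"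
    unfolding qA_def qB_def by (simp only: sum.distrib sum_distrib_left)
  finally have "0 = complex_of_real t * qA + complex_of_real (1 - t) * qB"
    using q0 by simp
  moreover have "Im qA = 0" "Re qA \<ge> 0" "Im qB = 0" "Re qB \<ge> 0"
    using pA pB vc unfolding psd_def qAv[symmetric] qBv[symmetric] by auto
  ultimately have "qA = 0"
    using t by (auto simp: complex_eq_iff add_nonneg_eq_0_iff)
  then have "ptrans N M A *\<^sub>v v = 0\<^sub>v (2 ^ N)"
    using psd_quadratic_form_zero_imp_kernel[OF pA vc] qAv by simp
  then have "(ptrans N M A *\<^sub>v v) $ l = 0"
    using l by simp
  then show ?thesis
    unfolding v_def using index_mult_mat_sparse_vec[OF ptrans_carrier a l] by simp
qed


section \<open>The state\<close>

locale dicke_edge_state =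
  fixes K N :: nat and Z \<sigma> :: real and f :: "int \<Rightarrow> real"
  assumes K_gt_1: "K > 1" and N_eq: "N = 2 * K + 1" and Z_pos: "Z > 0" and sigma: "\<sigma> \<in> {1, -1}"
    and f_0: "f 0 = 1" and f_1: "f 1 = 1 + Z" and f_rec: "\<forall>k. f (k + 2) = (2 + Z) * f (k + 1) - f k"
begin

lemma sigma_sq: "\<sigma> * \<sigma> = 1"
  using sigma by auto

lemma sigma_complex_sq: "complex_of_real \<sigma> * complex_of_real \<sigma> = 1"
  using sigma_sq by (metis of_real_1 of_real_mult)

lemma N_pos: "N > 0"
  using N_eq by simp

lemma N_ge_5: "N \<ge> 5"
  using N_eq K_gt_1 by simp

text \<open>With \<open>cosh (2 \<mu>) = 1 + Z/2\<close> the recurrence is solved by \<open>f n = cosh ((2 n + 1) \<mu>) / cosh \<mu>\<close>;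
  so \<open>f\<close> is symmetric about \<open>-1/2\<close>, at least \<open>1\<close>, and a sum of two exponentials.\<close>

definition mu :: real where
  "mu = arcosh (1 + Z / 2) / 2"

lemma mu_pos: "mu > 0"
  unfolding mu_def using Z_pos by simp

lemma cosh_add_2mu: "cosh (a + 2 * mu) = (2 + Z) * cosh a - cosh (a - 2 * mu)"
proof -
  have "cosh (a + 2 * mu) + cosh (a - 2 * mu) = 2 * cosh a * cosh (2 * mu)"
    by (simp add: cosh_add cosh_diff)
  moreover have "cosh (2 * mu) = 1 + Z / 2"
    unfolding mu_def using Z_pos by simp
  ultimately show ?thesis
    by (simp add: algebra_simps)
qed

lemma f_eq_cosh: "f n = cosh ((2 * of_int n + 1) * mu) / cosh mu"
proof (rule int_recurrence_unique[where c = "2 + Z"])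
  show "f (k + 2) = (2 + Z) * f (k + 1) - f k" for k
    using f_rec by blast
  show "cosh ((2 * of_int (k + 2) + 1) * mu) / cosh mu
      = (2 + Z) * (cosh ((2 * of_int (k + 1) + 1) * mu) / cosh mu) - cosh ((2 * of_int k + 1) * mu) / cosh mu"
    for k
    using cosh_add_2mu[of "(2 * of_int (k + 1) + 1) * mu"] by (simp add: algebra_simps flip: add_divide_distrib)
  show "f 0 = cosh ((2 * of_int 0 + 1) * mu) / cosh mu"
    using f_0 by simp
  show "f 1 = cosh ((2 * of_int 1 + 1) * mu) / cosh mu"
    using f_1 cosh_add_2mu[of mu] by (simp add: field_simps)
qed

lemma f_reflect: "f (- n - 1) = f n"
proof -
  have "(2 * of_int (- n - 1) + 1) * mu = - ((2 * of_int n + 1) * mu)"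
    by (simp add: algebra_simps)
  then show ?thesis
    unfolding f_eq_cosh by simp
qed

lemma f_minus_1: "f (-1) = 1"
  using f_reflect[of 0] f_0 by simp

lemma f_gt_1:
  assumes "n \<noteq> 0" "n \<noteq> -1"
  shows "f n > 1"
proof -
  have "\<bar>2 * n + 1\<bar> > 1"
    using assms by arith
  moreover have "\<bar>2 * real_of_int n + 1\<bar> = of_int \<bar>2 * n + 1\<bar>"
    by simp
  ultimately have "\<bar>2 * of_int n + 1\<bar> > (1::real)"
    by (metis of_int_1 of_int_less_iff)
  then have "\<bar>(2 * of_int n + 1) * mu\<bar> > mu"
    using mu_pos by (simp add: abs_mult)
  then have "cosh \<bar>(2 * of_int n + 1) * mu\<bar> > cosh mu"
    using mu_pos by (subst cosh_real_nonneg_less_iff) auto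
  then show ?thesis
    unfolding f_eq_cosh by simp
qed

lemma f_ge_1: "f n \<ge> 1"
  using f_gt_1[of n] f_0 f_minus_1 by (cases "n = 0 \<or> n = -1") auto

lemma f_casoratian: "f (n + 1) * f (n - 1) - f n ^ 2 = Z"
proof -
  define W where "W n = f (n + 1) * f (n - 1) - f n ^ 2" for n
  have "W (n + 1) = W n" for n
  proof -
    have fwd: "f (n + 2) = (2 + Z) * f (n + 1) - f n"
      using f_rec by simp
    have bwd: "f (n - 1) = (2 + Z) * f n - f (n + 1)"
      using spec[OF f_rec, of "n - 1"] by (simp add: ac_simps)
    have "W (n + 1) = f (n + 2) * f n - f (n + 1) ^ 2"
      unfolding W_def by (simp add: add.assoc)
    also have "\<dots> = W n"
      unfolding W_def fwd bwd by (simp add: algebra_simps power2_eq_square)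
    finally show ?thesis .
  qed
  then have "W n = W 0"
    by (rule int_shift_invariant_const)
  also have "W 0 = Z"
    unfolding W_def using f_0 f_1 f_minus_1 by simp
  finally show ?thesis
    unfolding W_def .
qed

lemma f_rec_weight:
  "f (int K - int n) - (2 + Z) * f (int K - int (n + 1)) + f (int K - int (n + 2)) = 0"
proof -
  have "f (int K - int n - 2 + 2) = (2 + Z) * f (int K - int n - 2 + 1) - f (int K - int n - 2)"
    using f_rec by blast
  moreover have "int K - int n - 2 + 2 = int K - int n" "int K - int n - 2 + 1 = int K - int (n + 1)"
    "int K - int n - 2 = int K - int (n + 2)"
    by simp_all
  ultimately have "f (int K - int n) = (2 + Z) * f (int K - int (n + 1)) - f (int K - int (n + 2))"
    by (simp only:)
  then show ?thesis
    by simp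
qed

lemma f_reflect_weight: "x \<le> N \<Longrightarrow> f (int K - int (N - x)) = f (int K - int x)"
  using f_reflect[of "int K - int x"] N_eq by (simp add: of_nat_diff algebra_simps)

definition cA :: real where
  "cA = exp (real N * mu) / (2 * cosh mu)"

definition cB :: real where
  "cB = exp (- (real N * mu)) / (2 * cosh mu)"

lemma cA_pos: "cA > 0"
  unfolding cA_def by simp

lemma cB_pos: "cB > 0"
  unfolding cB_def by simp

lemma f_as_exponentials:
  assumes "2 * x = u + w"
  shows "f (int K - int x)
    = cA * exp (- (real u * mu)) * exp (- (real w * mu)) + cB * exp (real u * mu) * exp (real w * mu)"
proof -
  have "2 * real x = real u + real w"
    using assms by (metis of_nat_add of_nat_mult of_nat_numeral)
  then have "(2 * real_of_int (int K - int x) + 1) * mu = real N * mu - real u * mu - real w * mu"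
    using N_eq by (simp add: algebra_simps)
  then have "f (int K - int x) = (exp (real N * mu - real u * mu - real w * mu)
      + exp (- (real N * mu - real u * mu - real w * mu))) / (2 * cosh mu)"
    unfolding f_eq_cosh by (simp add: cosh_def)
  then show ?thesis
    unfolding cA_def cB_def by (simp add: exp_diff exp_add exp_minus field_simps)
qed

lemma f_as_exponentials_sq: "cA * exp (- (real x * mu)) ^ 2 + cB * exp (real x * mu) ^ 2 = f (int K - int x)"
  using f_as_exponentials[of x x x] by (simp add: power2_eq_square mult.assoc)

lemma binomial_sum_f: "(\<Sum>k\<le>N. real (N choose k) * f (int K - int k)) = 2 * (4 + Z) ^ K"
proof -
  define a where "a = exp mu"
  define b where "b = exp (- mu)"
  have ab: "a * b = 1"
    unfolding a_def b_def by (simp add: exp_minus field_simps)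
  have apb: "a + b = 2 * cosh mu" "a + b > 0"
    unfolding a_def b_def cosh_def by (simp_all add: add_pos_pos)
  have f_ab: "f (int K - int k) = (a ^ (N - k) * b ^ k + b ^ (N - k) * a ^ k) / (a + b)" if "k \<le> N" for k
  proof -
    have "(2 * real_of_int (int K - int k) + 1) * mu = real (N - k) * mu - real k * mu"
      using that N_eq by (simp add: algebra_simps of_nat_diff)
    then have "cosh ((2 * real_of_int (int K - int k) + 1) * mu) = (a ^ (N - k) * b ^ k + b ^ (N - k) * a ^ k) / 2"
      unfolding a_def b_def cosh_def
      by (simp add: exp_diff exp_minus exp_of_nat_mult[symmetric] field_simps)
    then show ?thesis
      unfolding f_eq_cosh apb by (simp add: field_simps)
  qed
  have "(\<Sum>k\<le>N. real (N choose k) * f (int K - int k))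
      = ((\<Sum>k\<le>N. real (N choose k) * b ^ k * a ^ (N - k)) + (\<Sum>k\<le>N. real (N choose k) * a ^ k * b ^ (N - k))) / (a + b)"
  proof -
    have "(\<Sum>k\<le>N. real (N choose k) * f (int K - int k))
      = (\<Sum>k\<le>N. (real (N choose k) * b ^ k * a ^ (N - k) + real (N choose k) * a ^ k * b ^ (N - k)) / (a + b))"
      by (rule sum.cong[OF refl]) (use apb in \<open>simp add: f_ab field_simps\<close>)
    then show ?thesis
      unfolding sum_divide_distrib[symmetric] sum.distrib .
  qed
  also have "\<dots> = 2 * (a + b) ^ N / (a + b)"
    by (simp add: binomial_ring[symmetric] add.commute)
  also have "\<dots> = 2 * (a + b) ^ (2 * K)"
    using apb N_eq by (simp add: field_simps)
  also have "(a + b) ^ (2 * K) = ((a + b) ^ 2) ^ K"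
    by (simp add: power_mult)
  also have "(a + b) ^ 2 = 4 + Z"
  proof -
    have "a * a + b * b = 2 * cosh (2 * mu)"
      unfolding a_def b_def cosh_def by (simp add: exp_add[symmetric] exp_minus field_simps)
    moreover have "cosh (2 * mu) = 1 + Z / 2"
      unfolding mu_def using Z_pos by simp
    ultimately show ?thesis
      using ab by (simp add: power2_eq_square algebra_simps)
  qed
  finally show ?thesis .
qed

definition scale :: real where
  "scale = 1 / (2 * (4 + Z) ^ K)"

definition rho_weight :: "nat \<Rightarrow> nat \<Rightarrow> real" where
  "rho_weight x y = (if x = y then f (int K - int x) else 0)
     + \<sigma> * ((if x = 0 \<and> y = N then 1 else 0) + (if x = N \<and> y = 0 then 1 else 0))"

definition diag_part :: "complex mat" where
  "diag_part = msum (2 ^ N) (\<lambda>k. complex_of_real (real (N choose k) * f (int K - int k))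
                 \<cdot>\<^sub>m ketbra (dicke N k) (dicke N k)) {0..N}"

definition corner_part :: "complex mat" where
  "corner_part = complex_of_real \<sigma> \<cdot>\<^sub>m (ketbra (dicke N 0) (dicke N N) + ketbra (dicke N N) (dicke N 0))"

definition rho :: "complex mat" where
  "rho = complex_of_real (1 / (2 * (4 + Z) ^ K)) \<cdot>\<^sub>m (diag_part + corner_part)"

lemma scale_pos: "scale > 0"
  unfolding scale_def using Z_pos by simp

lemma rho_weight_diag: "rho_weight x x = f (int K - int x)"
  unfolding rho_weight_def using N_pos by auto

lemma dim_dicke [simp]: "dim_vec (dicke N k) = 2 ^ N"
  unfolding dicke_def by simp

lemma index_dicke:
  "i < 2 ^ N \<Longrightarrow> dicke N k $ i = (if num_ones N i = k then complex_of_real (1 / sqrt (real (N choose k))) else 0)"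
  unfolding dicke_def by simp

lemma ketbra_dicke_carrier: "ketbra (dicke N k) (dicke N l) \<in> carrier_mat (2 ^ N) (2 ^ N)"
  unfolding ketbra_def by simp

lemma diag_part_carrier: "diag_part \<in> carrier_mat (2 ^ N) (2 ^ N)"
  unfolding diag_part_def msum_def by simp

lemma corner_part_carrier: "corner_part \<in> carrier_mat (2 ^ N) (2 ^ N)"
  unfolding corner_part_def using ketbra_dicke_carrier by simp

lemma rho_carrier: "rho \<in> carrier_mat (2 ^ N) (2 ^ N)"
  unfolding rho_def using diag_part_carrier corner_part_carrier by simp

lemma index_scaled_dicke_projector:
  assumes "i < 2 ^ N" "j < 2 ^ N" "k \<le> N"
  shows "(complex_of_real (real (N choose k) * x) \<cdot>\<^sub>m ketbra (dicke N k) (dicke N k)) $$ (i, j)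
    = (if k = num_ones N i then (if num_ones N j = num_ones N i then complex_of_real x else 0) else 0)"
proof -
  have C: "real (N choose k) > 0"
    using assms by simp
  have "complex_of_real (1 / sqrt (real (N choose k))) * cnj (complex_of_real (1 / sqrt (real (N choose k))))
      = complex_of_real (1 / real (N choose k))"
    using C by (simp flip: of_real_mult)
  moreover have "complex_of_real (real (N choose k) * x) / complex_of_nat (N choose k) = complex_of_real x"
  proof -
    have "complex_of_nat (N choose k) = complex_of_real (real (N choose k))"
      by simp
    then show ?thesis
      using C by (simp del: of_real_of_nat_eq)
  qed
  ultimately show ?thesis
    using assms C by (auto simp: ketbra_def index_dicke simp flip: of_real_mult)
qed

lemma index_diag_part:
  assumes "i < 2 ^ N" "j < 2 ^ N"
  shows "diag_part $$ (i, j)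
    = complex_of_real (if num_ones N i = num_ones N j then f (int K - int (num_ones N i)) else 0)"
proof -
  have "diag_part $$ (i, j) = (\<Sum>k\<in>{0..N}. (complex_of_real (real (N choose k) * f (int K - int k))
      \<cdot>\<^sub>m ketbra (dicke N k) (dicke N k)) $$ (i, j))"
    unfolding diag_part_def msum_def using assms by simp
  also have "\<dots> = (\<Sum>k\<in>{0..N}. if k = num_ones N i
      then (if num_ones N j = num_ones N i then complex_of_real (f (int K - int k)) else 0) else 0)"
    by (rule sum.cong[OF refl]) (rule index_scaled_dicke_projector[OF assms], simp)
  finally show ?thesis
    using num_ones_le[of N i] by (simp add: sum.delta')
qed

lemma index_corner_part:
  assumes "i < 2 ^ N" "j < 2 ^ N"
  shows "corner_part $$ (i, j) = complex_of_real (\<sigma> * ((if num_ones N i = 0 \<and> num_ones N j = N then 1 else 0)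
    + (if num_ones N i = N \<and> num_ones N j = 0 then 1 else 0)))"
  using assms N_pos by (auto simp: corner_part_def ketbra_def index_dicke ketbra_dicke_carrier)

lemma index_rho:
  assumes "i < 2 ^ N" "j < 2 ^ N"
  shows "rho $$ (i, j) = complex_of_real (scale * rho_weight (num_ones N i) (num_ones N j))"
proof -
  have "rho $$ (i, j) = complex_of_real scale * (diag_part $$ (i, j) + corner_part $$ (i, j))"
    unfolding rho_def scale_def using assms diag_part_carrier corner_part_carrier by simp
  then show ?thesis
    unfolding index_diag_part[OF assms] index_corner_part[OF assms] rho_weight_def
    by (simp flip: of_real_mult of_real_add)
qed

lemma index_ptrans_rho:
  assumes "i < 2 ^ N" "j < 2 ^ N"
  shows "ptrans N M rho $$ (i, j)
    = complex_of_real (scale * rho_weight (ones_in N M j + ones_out N M i) (ones_in N M i + ones_out N M j))"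
  unfolding index_ptrans[OF assms] index_rho[OF pt_index_less pt_index_less] num_ones_pt_index ..

lemma trace_rho: "mtrace rho = 1"
proof -
  have "mtrace rho = complex_of_real (scale * (\<Sum>i<2 ^ N. f (int K - int (num_ones N i))))"
    unfolding mtrace_def using rho_carrier by (simp add: index_rho rho_weight_diag sum_distrib_left)
  also have "(\<Sum>i<2 ^ N. f (int K - int (num_ones N i))) = 2 * (4 + Z) ^ K"
    using sum_num_ones_eq_binomial_sum[where g = "\<lambda>k. f (int K - int k)" and N = N] binomial_sum_f by simp
  finally show ?thesis
    unfolding scale_def using Z_pos by simp
qed

lemma rho_weight_ptrans:
  "rho_weight (ones_in N M j + ones_out N M i) (ones_in N M i + ones_out N M j)
    = (if imbalance N M i = imbalance N M j then f (int K - int (ones_in N M j + ones_out N M i)) else 0)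
      + \<sigma> * ((if imbalance N M i = - int (card_in N M) \<and> imbalance N M j = int N - int (card_in N M) then 1 else 0)
           + (if imbalance N M i = int N - int (card_in N M) \<and> imbalance N M j = - int (card_in N M) then 1 else 0))"
proof -
  note bounds = ones_in_le[of N M i] ones_in_le[of N M j] ones_out_le[of N M i] ones_out_le[of N M j]
    card_in_le[of N M]
  have "ones_in N M j + ones_out N M i = 0 \<and> ones_in N M i + ones_out N M j = N
      \<longleftrightarrow> imbalance N M i = - int (card_in N M) \<and> imbalance N M j = int N - int (card_in N M)"
    "ones_in N M j + ones_out N M i = N \<and> ones_in N M i + ones_out N M j = 0
      \<longleftrightarrow> imbalance N M i = int N - int (card_in N M) \<and> imbalance N M j = - int (card_in N M)"
    unfolding imbalance_def using bounds by auto
  then show ?thesis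
    unfolding rho_weight_def imbalance_eq_iff by simp
qed

section \<open>Positivity of the partial transposes\<close>

text \<open>Writing \<open>f\<close> as a sum of two exponentials, the part of \<open>\<rho>\<^sup>\<Gamma>\<close> that lives on pairs of equal
  imbalance is a sum of two Gram matrices, one rank-one block per imbalance class. The corner part
  only couples the two extreme classes, where it is dominated because \<open>f \<ge> 1 = \<bar>\<sigma>\<bar>\<close>.\<close>

definition class_sum :: "nat set \<Rightarrow> (nat \<Rightarrow> real) \<Rightarrow> complex vec \<Rightarrow> int \<Rightarrow> complex" where
  "class_sum M w v \<delta> = (\<Sum>i\<in>{i\<in>{..<2 ^ N}. imbalance N M i = \<delta>}. complex_of_real (w (num_ones N i)) * v $ i)"

lemma class_sum_extreme:
  assumes "\<delta> = - int (card_in N M) \<and> k = card_in N M \<or> \<delta> = int N - int (card_in N M) \<and> k = N - card_in N M"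
  shows "class_sum M w v \<delta> = complex_of_real (w k) * class_sum M (\<lambda>_. 1) v \<delta>"
proof -
  have "num_ones N i = k" if "imbalance N M i = \<delta>" for i
    using that assms imbalance_eq_min_iff[of N M i] imbalance_eq_max_iff[of N M i]
      num_ones_eq_ones_in_plus_out[of N i M] by auto
  then show ?thesis
    unfolding class_sum_def sum_distrib_left by (intro sum.cong) auto
qed

lemma index_ptrans_rho_split:
  fixes M :: "nat set"
  assumes "i < 2 ^ N" "j < 2 ^ N"
  defines "h \<equiv> imbalance N M" and "m' \<equiv> card_in N M"
  shows "ptrans N M rho $$ (i, j) = complex_of_real (scale * (
      (if h i = h j then cA * exp (- (real (num_ones N i) * mu)) * exp (- (real (num_ones N j) * mu))
                        + cB * exp (real (num_ones N i) * mu) * exp (real (num_ones N j) * mu) else 0)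
    + \<sigma> * ((if h i = - int m' \<and> h j = int N - int m' then 1 else 0)
          + (if h i = int N - int m' \<and> h j = - int m' then 1 else 0))))"
proof -
  have "(if h i = h j then f (int K - int (ones_in N M j + ones_out N M i)) else 0)
      = (if h i = h j then cA * exp (- (real (num_ones N i) * mu)) * exp (- (real (num_ones N j) * mu))
                        + cB * exp (real (num_ones N i) * mu) * exp (real (num_ones N j) * mu) else 0)"
  proof (cases "h i = h j")
    case True
    then have "2 * (ones_in N M j + ones_out N M i) = num_ones N i + num_ones N j"
      unfolding h_def imbalance_def num_ones_eq_ones_in_plus_out[of N _ M] by presburger
    then have "f (int K - int (ones_in N M j + ones_out N M i))
        = cA * exp (- (real (num_ones N i) * mu)) * exp (- (real (num_ones N j) * mu))
          + cB * exp (real (num_ones N i) * mu) * exp (real (num_ones N j) * mu)"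
      by (rule f_as_exponentials)
    then show ?thesis
      using True by simp
  qed simp
  then show ?thesis
    unfolding index_ptrans_rho[OF assms(1,2)] rho_weight_ptrans h_def m'_def by simp
qed

lemma ptrans_rho_quadratic_form:
  fixes M :: "nat set"
  assumes v: "v \<in> carrier_vec (2 ^ N)"
  defines "D \<equiv> {- int N..int N}" and "m' \<equiv> card_in N M"
    and "a \<equiv> \<lambda>k. exp (- (real k * mu))" and "b \<equiv> \<lambda>k. exp (real k * mu)"
  shows "(ptrans N M rho *\<^sub>v v) \<bullet>c v = complex_of_real (scale * (
      cA * (\<Sum>\<delta>\<in>D. (cmod (class_sum M a v \<delta>))\<^sup>2) + cB * (\<Sum>\<delta>\<in>D. (cmod (class_sum M b v \<delta>))\<^sup>2)
    + \<sigma> * (2 * Re (cnj (class_sum M (\<lambda>_. 1) v (- int m')) * class_sum M (\<lambda>_. 1) v (int N - int m')))))"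
proof -
  define I where "I = {..<(2::nat) ^ N}"
  define h where "h = imbalance N M"
  define xa where "xa i = complex_of_real (a (num_ones N i)) * v $ i" for i
  define xb where "xb i = complex_of_real (b (num_ones N i)) * v $ i" for i
  define E1 where "E1 i \<longleftrightarrow> h i = - int m'" for i
  define E2 where "E2 i \<longleftrightarrow> h i = int N - int m'" for i
  define T1 where "T1 = class_sum M (\<lambda>_. 1) v (- int m')"
  define T2 where "T2 = class_sum M (\<lambda>_. 1) v (int N - int m')"
  have fI: "finite I" and fD: "finite D"
    unfolding I_def D_def by simp_all
  have hD: "h ` I \<subseteq> D"
  proof (rule image_subsetI)
    fix i
    show "h i \<in> D"
      using imbalance_bounds[of N M i] card_in_le[of N M] unfolding D_def h_def by auto
  qed
  have entry: "ptrans N M rho $$ (i, j) * v $ j * cnj (v $ i)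
      = complex_of_real scale * (complex_of_real cA * (if h i = h j then xa j * cnj (xa i) else 0)
         + complex_of_real cB * (if h i = h j then xb j * cnj (xb i) else 0)
         + complex_of_real \<sigma> * ((if E1 i \<and> E2 j then v $ j * cnj (v $ i) else 0)
                               + (if E2 i \<and> E1 j then v $ j * cnj (v $ i) else 0)))"
    if "i \<in> I" "j \<in> I" for i j
  proof -
    have ij: "i < 2 ^ N" "j < 2 ^ N"
      using that unfolding I_def by auto
    have "\<not> (E1 k \<and> E2 k)" for k
      unfolding E1_def E2_def using N_pos by auto
    then show ?thesis
      unfolding index_ptrans_rho_split[OF ij] xa_def xb_def a_def b_def
      unfolding E1_def[symmetric] E2_def[symmetric] h_def[symmetric] m'_def[symmetric]
      by (cases "h i = h j"; cases "E1 i \<and> E2 j"; cases "E2 i \<and> E1 j") (auto simp: algebra_simps)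
  qed
  have "(ptrans N M rho *\<^sub>v v) \<bullet>c v = (\<Sum>i\<in>I. \<Sum>j\<in>I. ptrans N M rho $$ (i, j) * v $ j * cnj (v $ i))"
    unfolding I_def by (rule quadratic_form_eq_double_sum[OF ptrans_carrier v])
  also have "\<dots> = complex_of_real scale * (complex_of_real cA * (\<Sum>i\<in>I. \<Sum>j\<in>I. if h i = h j then xa j * cnj (xa i) else 0)
       + complex_of_real cB * (\<Sum>i\<in>I. \<Sum>j\<in>I. if h i = h j then xb j * cnj (xb i) else 0)
       + complex_of_real \<sigma> * ((\<Sum>i\<in>I. \<Sum>j\<in>I. if E1 i \<and> E2 j then v $ j * cnj (v $ i) else 0)
                             + (\<Sum>i\<in>I. \<Sum>j\<in>I. if E2 i \<and> E1 j then v $ j * cnj (v $ i) else 0)))"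
    by (simp add: entry sum.distrib sum_distrib_left distrib_left cong: sum.cong)
  also have "\<dots> = complex_of_real scale * (complex_of_real cA * (\<Sum>\<delta>\<in>D. complex_of_real ((cmod (class_sum M a v \<delta>))\<^sup>2))
       + complex_of_real cB * (\<Sum>\<delta>\<in>D. complex_of_real ((cmod (class_sum M b v \<delta>))\<^sup>2))
       + complex_of_real \<sigma> * (cnj T1 * T2 + cnj T2 * T1))"
    unfolding double_sum_same_class_eq_sum_cmod_sq[OF fD hD fI] double_sum_indicator_product[OF fI]
    unfolding class_sum_def T1_def T2_def xa_def xb_def E1_def E2_def I_def h_def by simp
  also have "cnj T1 * T2 + cnj T2 * T1 = complex_of_real (2 * Re (cnj T1 * T2))"
  proof -
    have "cnj T2 * T1 = cnj (cnj T1 * T2)"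
      by simp
    then show ?thesis
      by (simp only: complex_add_cnj)
  qed
  finally show ?thesis
    unfolding T1_def T2_def by simp
qed

lemma cross_term_bound:
  fixes T1 T2 :: complex and c :: real
  assumes "c \<ge> 1"
  shows "c * (cmod T1)\<^sup>2 + c * (cmod T2)\<^sup>2 + 2 * \<sigma> * Re (cnj T1 * T2) \<ge> 0"
proof -
  have "\<bar>Re (cnj T1 * T2)\<bar> \<le> cmod T1 * cmod T2"
    using abs_Re_le_cmod[of "cnj T1 * T2"] by (simp add: norm_mult)
  then have "\<bar>2 * \<sigma> * Re (cnj T1 * T2)\<bar> \<le> 2 * cmod T1 * cmod T2"
    using sigma by (auto simp: abs_mult)
  moreover have "2 * cmod T1 * cmod T2 \<le> (cmod T1)\<^sup>2 + (cmod T2)\<^sup>2"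
    using sum_squares_bound[of "cmod T1" "cmod T2"] by (simp add: power2_eq_square)
  moreover have "(cmod T1)\<^sup>2 \<le> c * (cmod T1)\<^sup>2" "(cmod T2)\<^sup>2 \<le> c * (cmod T2)\<^sup>2"
    using assms by (simp_all add: mult_le_cancel_right1)
  ultimately show ?thesis
    by linarith
qed

lemma psd_ptrans_rho: "psd (2 ^ N) (ptrans N M rho)"
  unfolding psd_def
proof (intro conjI ballI)
  show "ptrans N M rho \<in> carrier_mat (2 ^ N) (2 ^ N)"
    by (rule ptrans_carrier)
  fix v :: "complex vec" assume v: "v \<in> carrier_vec (2 ^ N)"
  define D where "D = {- int N..int N}"
  define m' where "m' = card_in N M"
  define a where "a = (\<lambda>k. exp (- (real k * mu)))"
  define b where "b = (\<lambda>k. exp (real k * mu))"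
  define Sa where "Sa = class_sum M a v"
  define Sb where "Sb = class_sum M b v"
  define T1 where "T1 = class_sum M (\<lambda>_. 1) v (- int m')"
  define T2 where "T2 = class_sum M (\<lambda>_. 1) v (int N - int m')"
  define c where "c = f (int K - int m')"
  have m'N: "m' \<le> N"
    unfolding m'_def by (rule card_in_le)
  have extremes: "Sa (- int m') = complex_of_real (a m') * T1" "Sb (- int m') = complex_of_real (b m') * T1"
    "Sa (int N - int m') = complex_of_real (a (N - m')) * T2" "Sb (int N - int m') = complex_of_real (b (N - m')) * T2"
    unfolding Sa_def Sb_def T1_def T2_def m'_def by (simp_all add: class_sum_extreme)
  have c_weights: "cA * a m' ^ 2 + cB * b m' ^ 2 = c" "cA * a (N - m') ^ 2 + cB * b (N - m') ^ 2 = c"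
    unfolding a_def b_def c_def using f_as_exponentials_sq f_reflect_weight[OF m'N] by simp_all
  have inD: "- int m' \<in> D" "int N - int m' \<in> D" "- int m' \<noteq> int N - int m'"
    unfolding D_def using m'N N_pos by auto
  have "cA * ((cmod (Sa (- int m')))\<^sup>2 + (cmod (Sa (int N - int m')))\<^sup>2)
      + cB * ((cmod (Sb (- int m')))\<^sup>2 + (cmod (Sb (int N - int m')))\<^sup>2)
    = (cA * a m' ^ 2 + cB * b m' ^ 2) * (cmod T1)\<^sup>2 + (cA * a (N - m') ^ 2 + cB * b (N - m') ^ 2) * (cmod T2)\<^sup>2"
    unfolding extremes a_def b_def by (simp add: norm_mult power_mult_distrib algebra_simps)
  then have "c * (cmod T1)\<^sup>2 + c * (cmod T2)\<^sup>2
      = cA * ((cmod (Sa (- int m')))\<^sup>2 + (cmod (Sa (int N - int m')))\<^sup>2)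
      + cB * ((cmod (Sb (- int m')))\<^sup>2 + (cmod (Sb (int N - int m')))\<^sup>2)"
    unfolding c_weights by simp
  also have "\<dots> \<le> cA * (\<Sum>\<delta>\<in>D. (cmod (Sa \<delta>))\<^sup>2) + cB * (\<Sum>\<delta>\<in>D. (cmod (Sb \<delta>))\<^sup>2)"
    using sum_ge_two_terms[of D _ _ "\<lambda>\<delta>. (cmod (Sa \<delta>))\<^sup>2"] sum_ge_two_terms[of D _ _ "\<lambda>\<delta>. (cmod (Sb \<delta>))\<^sup>2"]
      inD cA_pos cB_pos unfolding D_def by (intro add_mono mult_left_mono) auto
  finally have "cA * (\<Sum>\<delta>\<in>D. (cmod (Sa \<delta>))\<^sup>2) + cB * (\<Sum>\<delta>\<in>D. (cmod (Sb \<delta>))\<^sup>2) + \<sigma> * (2 * Re (cnj T1 * T2)) \<ge> 0"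
    using cross_term_bound[of c T1 T2] f_ge_1 unfolding c_def by (simp add: algebra_simps)
  then show "Im ((ptrans N M rho *\<^sub>v v) \<bullet>c v) = 0" "0 \<le> Re ((ptrans N M rho *\<^sub>v v) \<bullet>c v)"
    unfolding ptrans_rho_quadratic_form[OF v] using scale_pos
    by (simp_all add: D_def m'_def a_def b_def Sa_def Sb_def T1_def T2_def)
qed

lemma density_rho: "density (2 ^ N) rho"
  unfolding density_def using psd_ptrans_rho[of "{}"] ptrans_empty[OF rho_carrier] trace_rho by simp

lemma ppt_all_rho: "ppt_all N rho"
  unfolding ppt_all_def using psd_ptrans_rho by simp

end


section \<open>Extremality\<close>

text \<open>A weight matrix \<open>g\<close> (the entries of a state between representatives of the weights) that obeys the
  three-term recurrence along diagonals and the two couplings coming from \<open>\<rho>\<^sup>\<Gamma>\<^sub>K\<close> and \<open>\<rho>\<^sup>\<Gamma>\<^sub>K\<^sub>+\<^sub>1\<close> is a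
  multiple of the weight matrix of \<open>\<rho>\<close>.\<close>

locale weight_constraints = dicke_edge_state +
  fixes g :: "nat \<Rightarrow> nat \<Rightarrow> complex"
  assumes diag_rec: "\<And>x y. x + 2 \<le> N \<Longrightarrow> y + 2 \<le> N \<Longrightarrow>
      g x y - (2 + complex_of_real Z) * g (x + 1) (y + 1) + g (x + 2) (y + 2) = 0"
    and couple_K: "\<And>e b. e \<le> K + 1 \<Longrightarrow> b \<le> K \<Longrightarrow> g (K + e) b = complex_of_real \<sigma> * g e (b + K + 1)"
    and couple_Suc_K: "\<And>e b. e \<le> K \<Longrightarrow> b \<le> K + 1 \<Longrightarrow> g (K + 1 + e) b = complex_of_real \<sigma> * g e (b + K)"
begin

lemma g_shift_lower: "K \<le> x \<Longrightarrow> x \<le> 2 * K \<Longrightarrow> y \<le> K \<Longrightarrow> g x y = g (x + 1) (y + 1)"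
  using couple_K[of "x - K" y] couple_Suc_K[of "x - K" "y + 1"] by (simp add: add.commute add.left_commute)

lemma g_shift_upper: "x \<le> K \<Longrightarrow> K \<le> y \<Longrightarrow> y \<le> 2 * K \<Longrightarrow> g x y = g (x + 1) (y + 1)"
proof -
  assume xy: "x \<le> K" "K \<le> y" "y \<le> 2 * K"
  have "complex_of_real \<sigma> * g x y = complex_of_real \<sigma> * g (x + 1) (y + 1)"
    using couple_Suc_K[of x "y - K"] couple_K[of "x + 1" "y - K"] xy
    by (simp add: add.commute add.left_commute)
  then show ?thesis
    using sigma_complex_sq by (metis mult.assoc mult_1)
qed

text \<open>Along a diagonal the recurrence determines \<open>g\<close> from two neighbouring values; in the middle block
  the shifts make three consecutive values equal, which the recurrence only allows for zero (as \<open>Z \<noteq> 0\<close>).\<close>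

lemma diagonal_zero_of_constant_triple:
  fixes h :: "nat \<Rightarrow> complex"
  assumes rec: "\<And>m. m + 2 \<le> L \<Longrightarrow> h m - (2 + complex_of_real Z) * h (m + 1) + h (m + 2) = 0"
    and p: "p + 2 \<le> L" and e1: "h p = h (p + 1)" and e2: "h (p + 1) = h (p + 2)" and n: "n \<le> L"
  shows "h n = 0"
proof -
  have "complex_of_real Z * h p = 0"
    using rec[OF p] unfolding e2[symmetric] e1[symmetric] by (simp add: algebra_simps)
  then have "h p = 0" "h (p + 1) = 0"
    using Z_pos e1 by auto
  then show ?thesis
    using recurrence_on_interval_unique[where h = h and u = "\<lambda>_. 0" and L = L and p = p and n = n
        and c = "2 + complex_of_real Z"] rec p n
    by simp
qed

lemma g_below_diagonal_zero:
  assumes "1 \<le> \<delta>" "\<delta> + 2 \<le> N" "n + \<delta> \<le> N"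
  shows "g (n + \<delta>) n = 0"
proof -
  define p where "p = (if K \<le> \<delta> then 0 else K - \<delta>)"
  have p: "K \<le> p + \<delta>" "p + 1 + \<delta> \<le> 2 * K" "p + 1 \<le> K"
    unfolding p_def using assms N_eq K_gt_1 by auto
  show ?thesis
  proof (rule diagonal_zero_of_constant_triple[where h = "\<lambda>n. g (n + \<delta>) n" and L = "N - \<delta>" and p = p])
    show "g (m + \<delta>) m - (2 + complex_of_real Z) * g (m + 1 + \<delta>) (m + 1) + g (m + 2 + \<delta>) (m + 2) = 0"
      if "m + 2 \<le> N - \<delta>" for m
      using diag_rec[of "m + \<delta>" m] that assms by (simp add: add_ac)
    show "g (p + \<delta>) p = g (p + 1 + \<delta>) (p + 1)" "g (p + 1 + \<delta>) (p + 1) = g (p + 2 + \<delta>) (p + 2)"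
      using g_shift_lower[of "p + \<delta>" p] g_shift_lower[of "p + 1 + \<delta>" "p + 1"] p by (simp_all add: add_ac)
  qed (use p assms N_eq in auto)
qed

lemma g_above_diagonal_zero:
  assumes "1 \<le> \<delta>" "\<delta> + 2 \<le> N" "n + \<delta> \<le> N"
  shows "g n (n + \<delta>) = 0"
proof -
  define p where "p = (if K \<le> \<delta> then 0 else K - \<delta>)"
  have p: "K \<le> p + \<delta>" "p + 1 + \<delta> \<le> 2 * K" "p + 1 \<le> K"
    unfolding p_def using assms N_eq K_gt_1 by auto
  show ?thesis
  proof (rule diagonal_zero_of_constant_triple[where h = "\<lambda>n. g n (n + \<delta>)" and L = "N - \<delta>" and p = p])
    show "g m (m + \<delta>) - (2 + complex_of_real Z) * g (m + 1) (m + 1 + \<delta>) + g (m + 2) (m + 2 + \<delta>) = 0"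
      if "m + 2 \<le> N - \<delta>" for m
      using diag_rec[of m "m + \<delta>"] that assms by (simp add: add_ac)
    show "g p (p + \<delta>) = g (p + 1) (p + 1 + \<delta>)" "g (p + 1) (p + 1 + \<delta>) = g (p + 2) (p + 2 + \<delta>)"
      using g_shift_upper[of p "p + \<delta>"] g_shift_upper[of "p + 1" "p + 1 + \<delta>"] p by (simp_all add: add_ac)
  qed (use p assms N_eq in auto)
qed

lemma g_diagonal: "n \<le> N \<Longrightarrow> g n n = g K K * complex_of_real (f (int K - int n))"
proof (rule recurrence_on_interval_unique[where h = "\<lambda>n. g n n" and L = N and p = K and c = "2 + complex_of_real Z"])
  show "g m m - (2 + complex_of_real Z) * g (m + 1) (m + 1) + g (m + 2) (m + 2) = 0" if "m + 2 \<le> N" for m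
    using diag_rec[of m m] that by simp
  show "g K K * complex_of_real (f (int K - int m)) - (2 + complex_of_real Z) * (g K K * complex_of_real (f (int K - int (m + 1))))
      + g K K * complex_of_real (f (int K - int (m + 2))) = 0" for m
  proof -
    have "complex_of_real (f (int K - int m) - (2 + Z) * f (int K - int (m + 1)) + f (int K - int (m + 2))) = 0"
      using f_rec_weight[of m] by simp
    then have "g K K * (complex_of_real (f (int K - int m)) - (2 + complex_of_real Z) * complex_of_real (f (int K - int (m + 1)))
        + complex_of_real (f (int K - int (m + 2)))) = 0"
      by simp
    then show ?thesis
      by (simp add: algebra_simps)
  qed
  show "g (K + 1) (K + 1) = g K K * complex_of_real (f (int K - int (K + 1)))"
    using g_shift_lower[of K K] f_minus_1 by simp
qed (use N_eq f_0 in auto)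

lemma g_corners: "g N 0 = complex_of_real \<sigma> * g K K" "g 0 N = complex_of_real \<sigma> * g K K"
proof -
  show "g N 0 = complex_of_real \<sigma> * g K K"
    using couple_K[of "K + 1" 0] g_shift_lower[of K K] N_eq by (simp add: add_ac mult_2)
  have "g K K = complex_of_real \<sigma> * g 0 N"
    using couple_K[of 0 K] N_eq by (simp add: add_ac mult_2)
  then show "g 0 N = complex_of_real \<sigma> * g K K"
    using sigma_complex_sq by (metis mult.assoc mult_1)
qed

lemma g_next_to_corners: "g (N - 1) 0 = 0" "g N 1 = 0" "g 0 (N - 1) = 0" "g 1 N = 0"
proof -
  have below: "g (K + 1) K = 0" "g (K + 2) (K + 1) = 0"
    using g_below_diagonal_zero[of 1 K] g_below_diagonal_zero[of 1 "K + 1"] N_eq K_gt_1 by (simp_all add: add_ac)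
  have above: "g K (K + 1) = 0" "g (K + 1) (K + 2) = 0"
    using g_above_diagonal_zero[of 1 K] g_above_diagonal_zero[of 1 "K + 1"] N_eq K_gt_1 by (simp_all add: add_ac)
  show "g (N - 1) 0 = 0" "g N 1 = 0"
    using couple_K[of K 0] couple_K[of "K + 1" 1] above N_eq K_gt_1 by (simp_all add: add_ac mult_2)
  have "complex_of_real \<sigma> * g 0 (N - 1) = 0" "complex_of_real \<sigma> * g 1 N = 0"
    using couple_Suc_K[of 0 K] couple_Suc_K[of 1 "K + 1"] below N_eq K_gt_1 by (simp_all add: add_ac mult_2)
  then show "g 0 (N - 1) = 0" "g 1 N = 0"
    using sigma by auto
qed

lemma g_eq_rho_weight:
  assumes "x \<le> N" "y \<le> N"
  shows "g x y = g K K * complex_of_real (rho_weight x y)"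
proof -
  consider "x = y" | "x = N \<and> y = 0" | "x = 0 \<and> y = N" | "y < x" "\<not> (x = N \<and> y = 0)" | "x < y" "\<not> (x = 0 \<and> y = N)"
    by linarith
  then show ?thesis
  proof cases
    case 1
    then show ?thesis using g_diagonal assms by (simp add: rho_weight_diag)
  next
    case 2
    then show ?thesis using g_corners N_pos by (simp add: rho_weight_def mult.commute)
  next
    case 3
    then show ?thesis using g_corners N_pos by (simp add: rho_weight_def mult.commute)
  next
    case 4
    then consider "x - y + 2 \<le> N" | "x = N - 1" "y = 0" | "x = N" "y = 1"
      using assms by linarith
    then have "g x y = 0"
    proof cases
      case 1
      moreover have "y + (x - y) = x"
        using 4 by simp
      ultimately show ?thesis
        using g_below_diagonal_zero[of "x - y" y] 4 assms by simp
    qed (use g_next_to_corners in simp_all)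
    then show ?thesis using 4 by (auto simp: rho_weight_def)
  next
    case 5
    then consider "y - x + 2 \<le> N" | "x = 0" "y = N - 1" | "x = 1" "y = N"
      using assms by linarith
    then have "g x y = 0"
    proof cases
      case 1
      moreover have "x + (y - x) = y"
        using 5 by simp
      ultimately show ?thesis
        using g_above_diagonal_zero[of "y - x" x] 5 assms by simp
    qed (use g_next_to_corners in simp_all)
    then show ?thesis using 5 by (auto simp: rho_weight_def)
  qed
qed

end


text \<open>A PPT state \<open>A\<close> with \<open>\<rho> = t A + (1 - t) B\<close> inherits every kernel vector of every \<open>\<rho>\<^sup>\<Gamma>\<close>. Kernel
  vectors of \<open>\<rho>\<close> and \<open>\<rho>\<^sup>\<Gamma>\<^sub>N\<close> make \<open>A\<close> depend on weights only, those of \<open>\<rho>\<^sup>\<Gamma>\<^sub>2\<close> (combinations of three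
  vectors of equal imbalance with coefficients \<open>1, -(2 + Z), 1\<close>) give the recurrence along diagonals, and
  those of \<open>\<rho>\<^sup>\<Gamma>\<^sub>K\<close>, \<open>\<rho>\<^sup>\<Gamma>\<^sub>K\<^sub>+\<^sub>1\<close> (pairing the two extreme imbalance classes, on which \<open>f = 1\<close>) give the couplings.\<close>

locale rho_face = dicke_edge_state +
  fixes A B :: "complex mat" and t :: real
  assumes A_ppt: "A \<in> ppt_states N" and B_ppt: "B \<in> ppt_states N" and t: "0 < t" "t < 1"
    and rho_split: "rho = complex_of_real t \<cdot>\<^sub>m A + complex_of_real (1 - t) \<cdot>\<^sub>m B"
begin

lemma A_carrier: "A \<in> carrier_mat (2 ^ N) (2 ^ N)"
  using A_ppt unfolding ppt_states_def density_def psd_def by auto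

lemmas A_kernel = ptrans_convex_combination_kernel[OF A_ppt B_ppt t rho_split]

lemma A_same_weight:
  assumes "l < 2 ^ N" "a < 2 ^ N" "b < 2 ^ N" "num_ones N a = num_ones N b"
  shows "A $$ (l, a) = A $$ (l, b)" "A $$ (a, l) = A $$ (b, l)"
proof -
  define vec_idx where "vec_idx k = (if k = 0 then a else b)" for k :: nat
  define coeff where "coeff k = (if k = 0 then 1 else - 1 :: complex)" for k :: nat
  have vec_idx: "\<And>k. k < 2 \<Longrightarrow> vec_idx k < 2 ^ N"
    unfolding vec_idx_def using assms by auto
  have "(\<Sum>k'<2. \<Sum>k<2. ptrans N M rho $$ (vec_idx k', vec_idx k) * coeff k * cnj (coeff k')) = 0"
    if "M = {} \<or> M = {..<N}" for M
    using that assms unfolding sum_lessThan_2 vec_idx_def coeff_def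
    by (auto simp: index_ptrans_all ptrans_empty[OF rho_carrier] index_rho)
  then have "(\<Sum>k<2. ptrans N M A $$ (l, vec_idx k) * coeff k) = 0" if "M = {} \<or> M = {..<N}" for M
    using A_kernel[OF _ vec_idx] that assms(1) by auto
  from this[of "{}"] this[of "{..<N}"] show "A $$ (l, a) = A $$ (l, b)" "A $$ (a, l) = A $$ (b, l)"
    using assms unfolding sum_lessThan_2 vec_idx_def coeff_def
    by (simp_all add: ptrans_empty[OF A_carrier] index_ptrans_all)
qed

definition weight_entry :: "nat \<Rightarrow> nat \<Rightarrow> complex" where
  "weight_entry x y = A $$ (block_index N N x 0, block_index N N y 0)"

lemma index_A: "i < 2 ^ N \<Longrightarrow> j < 2 ^ N \<Longrightarrow> A $$ (i, j) = weight_entry (num_ones N i) (num_ones N j)"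
  unfolding weight_entry_def
  using A_same_weight(1)[of i j "block_index N N (num_ones N j) 0"]
    A_same_weight(2)[of "block_index N N (num_ones N j) 0" i "block_index N N (num_ones N i) 0"]
  by (simp add: block_index_less num_ones_block_index_weight num_ones_le)

lemma index_ptrans_A:
  "l < 2 ^ N \<Longrightarrow> j < 2 ^ N \<Longrightarrow>
    ptrans N M A $$ (l, j) = weight_entry (ones_in N M j + ones_out N M l) (ones_in N M l + ones_out N M j)"
  by (simp add: index_ptrans index_A pt_index_less num_ones_pt_index)

lemma weight_entry_diag_rec_offset:
  assumes e: "e + 2 \<le> N" and b: "b \<le> 2" and d: "d + 4 \<le> N"
  shows "weight_entry e (b + d) - (2 + complex_of_real Z) * weight_entry (e + 1) (b + d + 1)
    + weight_entry (e + 2) (b + d + 2) = 0"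
proof -
  define vec_idx where "vec_idx k = block_index N 2 k (d + k)" for k
  define coeff where "coeff k = (if k = 1 then - (2 + complex_of_real Z) else 1)" for k :: nat
  define F where "F j = f (int K - int (d + j))" for j
  have vec_idx: "\<And>k. k < 3 \<Longrightarrow> vec_idx k < 2 ^ N"
    unfolding vec_idx_def by (simp add: block_index_less)
  have in_aa: "ones_in N {..<2} (vec_idx k) = k" and out_aa: "ones_out N {..<2} (vec_idx k) = d + k" if "k < 3" for k
    unfolding vec_idx_def using that d by (auto intro: ones_in_block_index ones_out_block_index)
  have entry: "ptrans N {..<2} rho $$ (vec_idx k', vec_idx k) = complex_of_real (scale * F (k + k'))"
    if "k < 3" "k' < 3" for k k'
    using index_ptrans_rho[OF vec_idx vec_idx, of k' k] that in_aa out_aa rho_weight_diag[of "d + k + k'"]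
    by (simp add: F_def add_ac)
  have "F 0 - 2 * (2 + Z) * F 1 + (2 + (2 + Z) ^ 2) * F 2 - 2 * (2 + Z) * F 3 + F 4
      = (F 0 - (2 + Z) * F 1 + F 2) - (2 + Z) * (F 1 - (2 + Z) * F 2 + F 3) + (F 2 - (2 + Z) * F 3 + F 4)"
    by (simp add: algebra_simps power2_eq_square)
  also have "\<dots> = 0"
    using f_rec_weight[of d] f_rec_weight[of "d + 1"] f_rec_weight[of "d + 2"] by (simp add: F_def add_ac)
  finally have rec4: "F 0 - 2 * (2 + Z) * F 1 + (2 + (2 + Z) ^ 2) * F 2 - 2 * (2 + Z) * F 3 + F 4 = 0" .
  have "(\<Sum>k'<3. \<Sum>k<3. ptrans N {..<2} rho $$ (vec_idx k', vec_idx k) * coeff k * cnj (coeff k'))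
      = complex_of_real (scale * (F 0 - 2 * (2 + Z) * F 1 + (2 + (2 + Z) ^ 2) * F 2 - 2 * (2 + Z) * F 3 + F 4))"
    unfolding sum_lessThan_3 by (simp add: entry coeff_def F_def algebra_simps power2_eq_square numeral_3_eq_3 add_ac)
  then have "(\<Sum>k'<3. \<Sum>k<3. ptrans N {..<2} rho $$ (vec_idx k', vec_idx k) * coeff k * cnj (coeff k')) = 0"
    unfolding rec4 by simp
  then have "(\<Sum>k<3. ptrans N {..<2} A $$ (block_index N 2 b e, vec_idx k) * coeff k) = 0"
    using A_kernel[OF _ vec_idx _ block_index_less] d by auto
  moreover have "ones_in N {..<2} (block_index N 2 b e) = b" "ones_out N {..<2} (block_index N 2 b e) = e"
    using b d e by (auto intro: ones_in_block_index ones_out_block_index)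
  ultimately show ?thesis
    unfolding sum_lessThan_3 using index_ptrans_A[OF block_index_less vec_idx] in_aa out_aa
    by (simp add: coeff_def add_ac) (simp add: algebra_simps)
qed

lemma weight_entry_diag_rec:
  assumes "x + 2 \<le> N" "y + 2 \<le> N"
  shows "weight_entry x y - (2 + complex_of_real Z) * weight_entry (x + 1) (y + 1) + weight_entry (x + 2) (y + 2) = 0"
proof (cases "y + 4 \<le> N")
  case True
  then show ?thesis
    using weight_entry_diag_rec_offset[of x 0 y] assms by simp
next
  case False
  then show ?thesis
    using weight_entry_diag_rec_offset[of x "y + 4 - N" "N - 4"] assms N_ge_5 by simp
qed

lemma weight_entry_coupling:
  assumes m: "m = K \<or> m = K + 1" and e: "m + e \<le> N" and b: "b \<le> m"
  shows "weight_entry (m + e) b = complex_of_real \<sigma> * weight_entry e (b + (N - m))"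
proof -
  define vec_idx where "vec_idx k = (if k = 0 then block_index N m m 0 else block_index N m 0 (N - m))" for k :: nat
  define coeff where "coeff k = (if k = 0 then 1 else - complex_of_real \<sigma>)" for k :: nat
  have mN: "m \<le> N"
    using m N_eq by auto
  have vec_idx: "\<And>k. k < 2 \<Longrightarrow> vec_idx k < 2 ^ N"
    unfolding vec_idx_def by (simp add: block_index_less)
  have ones_aa: "ones_in N {..<m} (block_index N m m 0) = m" "ones_out N {..<m} (block_index N m m 0) = 0"
    "ones_in N {..<m} (block_index N m 0 (N - m)) = 0" "ones_out N {..<m} (block_index N m 0 (N - m)) = N - m"
    using mN by (simp_all add: ones_in_block_index ones_out_block_index)
  have "f (int K - int m) = 1" "f (int K - int (N - m)) = 1"
    using m N_eq f_0 f_minus_1 by auto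
  then have corner: "rho_weight m m - \<sigma> * rho_weight 0 N - \<sigma> * rho_weight N 0 + \<sigma> * \<sigma> * rho_weight (N - m) (N - m) = 0"
    unfolding rho_weight_diag using N_pos sigma_sq by (simp add: rho_weight_def)
  have "(\<Sum>k'<2. \<Sum>k<2. ptrans N {..<m} rho $$ (vec_idx k', vec_idx k) * coeff k * cnj (coeff k'))
      = complex_of_real (scale * (rho_weight m m - \<sigma> * rho_weight 0 N - \<sigma> * rho_weight N 0
          + \<sigma> * \<sigma> * rho_weight (N - m) (N - m)))"
    unfolding sum_lessThan_2 coeff_def vec_idx_def using mN
    by (simp add: index_ptrans_rho block_index_less ones_aa algebra_simps)
  then have "(\<Sum>k'<2. \<Sum>k<2. ptrans N {..<m} rho $$ (vec_idx k', vec_idx k) * coeff k * cnj (coeff k')) = 0"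
    unfolding corner by simp
  then have "(\<Sum>k<2. ptrans N {..<m} A $$ (block_index N m b e, vec_idx k) * coeff k) = 0"
    using A_kernel[OF _ vec_idx _ block_index_less] mN by auto
  moreover have "ones_in N {..<m} (block_index N m b e) = b" "ones_out N {..<m} (block_index N m b e) = e"
    using b e mN by (auto intro: ones_in_block_index ones_out_block_index)
  ultimately show ?thesis
    unfolding sum_lessThan_2 vec_idx_def using ones_aa
    by (simp add: index_ptrans_A block_index_less coeff_def add_ac algebra_simps)
qed

sublocale weight_constraints K N Z \<sigma> f weight_entry
proof unfold_locales
  show "weight_entry (K + e) b = complex_of_real \<sigma> * weight_entry e (b + K + 1)" if "e \<le> K + 1" "b \<le> K" for e b
    using weight_entry_coupling[of K e b] that N_eq by (simp add: add_ac)
  show "weight_entry (K + 1 + e) b = complex_of_real \<sigma> * weight_entry e (b + K)" if "e \<le> K" "b \<le> K + 1" for e b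
    using weight_entry_coupling[of "K + 1" e b] that N_eq by (simp add: add_ac)
qed (rule weight_entry_diag_rec)

lemma A_eq_rho: "A = rho"
proof -
  have A_entry: "A $$ (i, j) = weight_entry K K * complex_of_real (rho_weight (num_ones N i) (num_ones N j))"
    if "i < 2 ^ N" "j < 2 ^ N" for i j
    using that index_A g_eq_rho_weight num_ones_le by simp
  define T where "T = (\<Sum>i<2 ^ N. complex_of_real (rho_weight (num_ones N i) (num_ones N i)))"
  have "complex_of_real scale * T = 1"
    using trace_rho unfolding mtrace_def T_def using rho_carrier by (simp add: index_rho sum_distrib_left)
  moreover have "weight_entry K K * T = 1"
    using A_ppt A_carrier unfolding ppt_states_def density_def mtrace_def T_def
    by (simp add: A_entry sum_distrib_left)
  ultimately have "weight_entry K K = complex_of_real scale"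
    by (metis mult_cancel_right mult_eq_0_iff zero_neq_one)
  then show ?thesis
    using A_carrier rho_carrier by (intro eq_matI) (auto simp: A_entry index_rho)
qed

end

lemma (in dicke_edge_state) extreme_point_rho: "extreme_point_mat rho (ppt_states N)"
  unfolding extreme_point_mat_def
proof (intro conjI ballI allI impI)
  show "rho \<in> ppt_states N"
    unfolding ppt_states_def using density_rho ppt_all_rho by simp
  fix A B t assume A: "A \<in> ppt_states N" and B: "B \<in> ppt_states N"
    and split: "0 < t \<and> t < 1 \<and> rho = complex_of_real t \<cdot>\<^sub>m A + complex_of_real (1 - t) \<cdot>\<^sub>m B"
  have "B \<in> carrier_mat (2 ^ N) (2 ^ N)" "A \<in> carrier_mat (2 ^ N) (2 ^ N)"
    using A B unfolding ppt_states_def density_def psd_def by auto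
  then have "complex_of_real t \<cdot>\<^sub>m A + complex_of_real (1 - t) \<cdot>\<^sub>m B
      = complex_of_real (1 - t) \<cdot>\<^sub>m B + complex_of_real t \<cdot>\<^sub>m A"
    by (intro comm_add_mat) auto
  then have "rho = complex_of_real (1 - t) \<cdot>\<^sub>m B + complex_of_real (1 - (1 - t)) \<cdot>\<^sub>m A"
    using split by simp
  then have "rho_face K N Z \<sigma> f A B t" "rho_face K N Z \<sigma> f B A (1 - t)"
    using A B split by (unfold_locales; simp)+
  then show "A = B"
    using rho_face.A_eq_rho by metis
qed


section \<open>Entanglement\<close>

lemma psd2_quadratic_form:
  fixes X :: "complex mat" and \<alpha> \<beta> :: complex
  assumes X: "psd 2 X"
  defines "q \<equiv> X $$ (0,0) * cnj \<alpha> * \<alpha> + X $$ (0,1) * \<beta> * cnj \<alpha> + X $$ (1,0) * \<alpha> * cnj \<beta> + X $$ (1,1) * \<beta> * cnj \<beta>"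
  shows "Im q = 0" "Re q \<ge> 0"
proof -
  have Xc: "X \<in> carrier_mat 2 2"
    using X unfolding psd_def by simp
  define v where "v = vec 2 (\<lambda>i. if i = 0 then \<alpha> else \<beta>)"
  have vc: "v \<in> carrier_vec 2"
    unfolding v_def by simp
  have "(X *\<^sub>v v) \<bullet>c v = (\<Sum>i<2. \<Sum>j<2. X $$ (i, j) * v $ j * cnj (v $ i))"
    by (rule quadratic_form_eq_double_sum[OF Xc vc])
  then have "(X *\<^sub>v v) \<bullet>c v = q"
    unfolding q_def v_def by (simp add: sum_lessThan_2 algebra_simps)
  then show "Im q = 0" "Re q \<ge> 0"
    using X vc unfolding psd_def by metis+
qed

lemma psd2_diagonal:
  fixes X :: "complex mat"
  assumes X: "psd 2 X"
  shows "Im (X $$ (0,0)) = 0" "Re (X $$ (0,0)) \<ge> 0" "Im (X $$ (1,1)) = 0" "Re (X $$ (1,1)) \<ge> 0"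
    and "X $$ (1,0) = cnj (X $$ (0,1))"
proof -
  note q = psd2_quadratic_form[OF X]
  show a: "Im (X $$ (0,0)) = 0" "Re (X $$ (0,0)) \<ge> 0"
    using q[of 1 0] by simp_all
  show b: "Im (X $$ (1,1)) = 0" "Re (X $$ (1,1)) \<ge> 0"
    using q[of 0 1] by simp_all
  have "Im (X $$ (0,1) + X $$ (1,0)) = 0" "Re (X $$ (0,1) - X $$ (1,0)) = 0"
    using q(1)[of 1 1] q(1)[of 1 \<i>] a b by (simp_all add: algebra_simps)
  then show "X $$ (1,0) = cnj (X $$ (0,1))"
    by (simp add: complex_eq_iff)
qed

lemma psd2_Re_quadratic_form:
  fixes X :: "complex mat"
  assumes X: "psd 2 X"
  shows "Re (X $$ (0,0) * cnj \<alpha> * \<alpha> + X $$ (0,1) * \<beta> * cnj \<alpha> + X $$ (1,0) * \<alpha> * cnj \<beta> + X $$ (1,1) * \<beta> * cnj \<beta>)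
     = Re (X $$ (0,0)) * (cmod \<alpha>)\<^sup>2 + Re (X $$ (1,1)) * (cmod \<beta>)\<^sup>2 + 2 * Re (X $$ (0,1) * \<beta> * cnj \<alpha>)"
proof -
  note d = psd2_diagonal[OF X]
  have X00: "X $$ (0,0) = complex_of_real (Re (X $$ (0,0)))" and X11: "X $$ (1,1) = complex_of_real (Re (X $$ (1,1)))"
    using d by (simp_all add: complex_eq_iff)
  have X10: "X $$ (1,0) * \<alpha> * cnj \<beta> = cnj (X $$ (0,1) * \<beta> * cnj \<alpha>)"
    unfolding d(5) by simp
  have Re_of_real_mult: "Re (complex_of_real c * w) = c * Re w" for c w
    by simp
  have "Re (X $$ (0,0) * cnj \<alpha> * \<alpha> + X $$ (0,1) * \<beta> * cnj \<alpha> + X $$ (1,0) * \<alpha> * cnj \<beta> + X $$ (1,1) * \<beta> * cnj \<beta>)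
     = Re (X $$ (0,0)) * Re (cnj \<alpha> * \<alpha>) + Re (X $$ (0,1) * \<beta> * cnj \<alpha>) + Re (cnj (X $$ (0,1) * \<beta> * cnj \<alpha>))
       + Re (X $$ (1,1)) * Re (\<beta> * cnj \<beta>)"
    unfolding X10 by (subst X00, subst X11, simp only: plus_complex.sel mult.assoc Re_of_real_mult)
  moreover have "Re (cnj (X $$ (0,1) * \<beta> * cnj \<alpha>)) = Re (X $$ (0,1) * \<beta> * cnj \<alpha>)"
    by (rule cnj.sel(1))
  moreover have norms: "Re (cnj \<alpha> * \<alpha>) = (cmod \<alpha>)\<^sup>2" "Re (\<beta> * cnj \<beta>) = (cmod \<beta>)\<^sup>2"
    using complex_norm_square[of \<alpha>] complex_norm_square[of \<beta>] by (metis Re_complex_of_real mult.commute)+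
  ultimately show ?thesis
    unfolding norms by linarith
qed

text \<open>With \<open>x, y\<close> the diagonal entries and \<open>z\<close> the upper off-diagonal entry, evaluate the quadratic form
  at \<open>(-z, x)\<close> if \<open>x > 0\<close>, at \<open>(y, -cnj z)\<close> if \<open>y > 0\<close>, and at \<open>(-z, 1)\<close> if \<open>x = y = 0\<close>.\<close>

lemma psd2_off_diagonal_bound:
  fixes X :: "complex mat"
  assumes X: "psd 2 X"
  shows "(cmod (X $$ (0,1)))\<^sup>2 \<le> Re (X $$ (0,0)) * Re (X $$ (1,1))"
    and "(cmod (X $$ (1,0)))\<^sup>2 \<le> Re (X $$ (0,0)) * Re (X $$ (1,1))"
proof -
  note d = psd2_diagonal[OF X]
  define x where "x = Re (X $$ (0,0))"
  define y where "y = Re (X $$ (1,1))"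
  define z where "z = X $$ (0,1)"
  have form: "0 \<le> x * (cmod \<alpha>)\<^sup>2 + y * (cmod \<beta>)\<^sup>2 + 2 * Re (z * \<beta> * cnj \<alpha>)" for \<alpha> \<beta>
    using psd2_quadratic_form(2)[OF X, of \<alpha> \<beta>] unfolding psd2_Re_quadratic_form[OF X] x_def y_def z_def .
  have cmod_sq: "cmod w * cmod w = Re w * Re w + Im w * Im w" for w
    using cmod_power2[of w] by (simp add: power2_eq_square)
  have "(cmod z)\<^sup>2 \<le> x * y"
  proof (cases "x > 0")
    case True
    have "0 \<le> x * (x * y - (cmod z)\<^sup>2)"
      using form[of "- z" "complex_of_real x"] by (simp add: cmod_sq power2_eq_square algebra_simps)
    then show ?thesis
      using True by (simp add: zero_le_mult_iff)
  next
    case False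
    then have x0: "x = 0"
      using d unfolding x_def by simp
    show ?thesis
    proof (cases "y > 0")
      case True
      have "0 \<le> y * (x * y - (cmod z)\<^sup>2)"
        using form[of "complex_of_real y" "- cnj z"] by (simp add: cmod_sq power2_eq_square algebra_simps)
      then show ?thesis
        using True by (simp add: zero_le_mult_iff)
    next
      case False
      then have "y = 0"
        using d unfolding y_def by simp
      then show ?thesis
        using x0 form[of "- z" 1] by (simp add: cmod_sq power2_eq_square algebra_simps)
    qed
  qed
  then show "(cmod (X $$ (0,1)))\<^sup>2 \<le> Re (X $$ (0,0)) * Re (X $$ (1,1))"
    "(cmod (X $$ (1,0)))\<^sup>2 \<le> Re (X $$ (0,0)) * Re (X $$ (1,1))"
    unfolding x_def y_def z_def d(5) by simp_all
qed

lemma psd2_entry_bound: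
  fixes X :: "complex mat"
  assumes X: "psd 2 X" and "x \<le> 1" "y \<le> 1"
  shows "X $$ (x, x) = complex_of_real (Re (X $$ (x, x)))" "Re (X $$ (x, x)) \<ge> 0"
    "(cmod (X $$ (x, y)))\<^sup>2 \<le> Re (X $$ (x, x)) * Re (X $$ (y, y))"
proof -
  note E = psd2_diagonal[OF X] psd2_off_diagonal_bound[OF X]
  have xy: "x = 0 \<or> x = 1" "y = 0 \<or> y = 1"
    using assms by auto
  show "X $$ (x, x) = complex_of_real (Re (X $$ (x, x)))" "Re (X $$ (x, x)) \<ge> 0"
    using xy E by (auto simp: complex_eq_iff)
  have "(cmod (X $$ (k, k)))\<^sup>2 = Re (X $$ (k, k)) * Re (X $$ (k, k))" if "k = 0 \<or> k = 1" for k
    using that E cmod_power2[of "X $$ (k, k)"] by (auto simp: power2_eq_square)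
  then show "(cmod (X $$ (x, y)))\<^sup>2 \<le> Re (X $$ (x, x)) * Re (X $$ (y, y))"
    using xy E by (auto simp: mult.commute)
qed

lemma cross_term_le_sum:
  fixes x y :: real and z :: complex
  assumes "x \<ge> 0" "y \<ge> 0" "(cmod z)\<^sup>2 \<le> x * y"
  shows "x + y - 2 * Re z \<ge> 0" and "x + y - 2 * Re z = 0 \<Longrightarrow> x = y"
proof -
  have Re_z: "(Re z)\<^sup>2 \<le> x * y"
    using abs_Re_le_cmod[of z] assms(3) by (metis abs_ge_zero power2_abs power_mono order.trans)
  show "x + y - 2 * Re z \<ge> 0"
  proof (rule ccontr)
    assume "\<not> ?thesis"
    then have "(2 * Re z)\<^sup>2 > (x + y)\<^sup>2"
      using assms by (intro power_strict_mono) auto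
    moreover have "(x + y)\<^sup>2 \<ge> 4 * (x * y)"
      using sum_squares_bound[of x y] by (simp add: power2_eq_square algebra_simps)
    ultimately show False
      using Re_z by (simp add: power2_eq_square)
  qed
  assume "x + y - 2 * Re z = 0"
  then have "(x + y)\<^sup>2 \<le> 4 * (x * y)"
    using Re_z by (simp add: power2_eq_square algebra_simps)
  then have "(x - y)\<^sup>2 \<le> 0"
    by (simp add: power2_eq_square algebra_simps)
  then show "x = y"
    by simp
qed

locale product_mixture =
  fixes N n :: nat and p :: "nat \<Rightarrow> real" and r :: "nat \<Rightarrow> nat \<Rightarrow> complex mat"
  assumes p_nonneg: "\<And>l. l < n \<Longrightarrow> p l \<ge> 0" and r_psd: "\<And>l q. l < n \<Longrightarrow> q < N \<Longrightarrow> psd 2 (r l q)"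
begin

definition mixture :: "complex mat" where
  "mixture = msum (2 ^ N) (\<lambda>l. complex_of_real (p l) \<cdot>\<^sub>m tensor_qubits N (r l)) {..<n}"

definition prod_entry :: "nat \<Rightarrow> nat \<Rightarrow> nat \<Rightarrow> complex" where
  "prod_entry l i j = (\<Prod>q<N. r l q $$ (qbit i q, qbit j q))"

definition prod_diag :: "nat \<Rightarrow> nat \<Rightarrow> real" where
  "prod_diag l i = (\<Prod>q<N. Re (r l q $$ (qbit i q, qbit i q)))"

lemma factor_entry_bound:
  assumes "l < n" "q < N"
  shows "r l q $$ (qbit i q, qbit i q) = complex_of_real (Re (r l q $$ (qbit i q, qbit i q)))"
    "Re (r l q $$ (qbit i q, qbit i q)) \<ge> 0"
    "(cmod (r l q $$ (qbit i q, qbit j q)))\<^sup>2 \<le> Re (r l q $$ (qbit i q, qbit i q)) * Re (r l q $$ (qbit j q, qbit j q))"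
  using psd2_entry_bound[OF r_psd[OF assms] qbit_le_1 qbit_le_1] by blast+

lemma prod_diag_nonneg: "l < n \<Longrightarrow> prod_diag l i \<ge> 0"
  unfolding prod_diag_def by (rule prod_nonneg) (simp add: factor_entry_bound(2))

lemma prod_entry_diag: "l < n \<Longrightarrow> prod_entry l i i = complex_of_real (prod_diag l i)"
  unfolding prod_entry_def prod_diag_def of_real_prod
  by (intro prod.cong refl) (simp add: factor_entry_bound(1)[symmetric])

lemma prod_entry_bound:
  assumes "l < n"
  shows "(cmod (prod_entry l i j))\<^sup>2 \<le> prod_diag l i * prod_diag l j"
proof -
  have "(cmod (prod_entry l i j))\<^sup>2 = (\<Prod>q<N. (cmod (r l q $$ (qbit i q, qbit j q)))\<^sup>2)"
    unfolding prod_entry_def by (simp add: prod_norm[symmetric] prod_power_distrib)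
  also have "\<dots> \<le> (\<Prod>q<N. Re (r l q $$ (qbit i q, qbit i q)) * Re (r l q $$ (qbit j q, qbit j q)))"
    by (rule prod_mono) (simp add: factor_entry_bound(3) assms)
  also have "\<dots> = prod_diag l i * prod_diag l j"
    unfolding prod_diag_def by (rule prod.distrib)
  finally show ?thesis .
qed

lemma prod_diag_mult_swap:
  assumes "\<And>q. q < N \<Longrightarrow> (qbit a q = qbit a' q \<and> qbit b q = qbit b' q) \<or> (qbit a q = qbit b' q \<and> qbit b q = qbit a' q)"
  shows "prod_diag l a * prod_diag l b = prod_diag l a' * prod_diag l b'"
  unfolding prod_diag_def prod.distrib[symmetric]
proof (intro prod.cong refl)
  fix q assume "q \<in> {..<N}"
  with assms[of q] show "Re (r l q $$ (qbit a q, qbit a q)) * Re (r l q $$ (qbit b q, qbit b q))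
      = Re (r l q $$ (qbit a' q, qbit a' q)) * Re (r l q $$ (qbit b' q, qbit b' q))"
    by (auto simp: mult.commute)
qed

lemma Re_index_mixture:
  "i < 2 ^ N \<Longrightarrow> j < 2 ^ N \<Longrightarrow> Re (mixture $$ (i, j)) = (\<Sum>l<n. p l * Re (prod_entry l i j))"
  unfolding mixture_def msum_def by (simp add: tensor_qubits_def prod_entry_def Re_sum)

lemma Re_index_mixture_diag:
  "i < 2 ^ N \<Longrightarrow> Re (mixture $$ (i, i)) = (\<Sum>l<n. p l * prod_diag l i)"
  unfolding Re_index_mixture by (intro sum.cong refl) (simp add: prod_entry_diag)

lemma prod_diag_eq_of_balanced_entries:
  fixes c :: real
  assumes c: "\<bar>c\<bar> = 1"
    and swap: "\<And>l. l < n \<Longrightarrow> prod_diag l z * prod_diag l w = prod_diag l a * prod_diag l b"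
    and idx: "a < 2 ^ N" "b < 2 ^ N" "z < 2 ^ N" "w < 2 ^ N"
    and balanced: "Re (mixture $$ (a, a)) + Re (mixture $$ (b, b)) - 2 * c * Re (mixture $$ (z, w)) = 0"
    and l: "l < n" "p l > 0"
  shows "prod_diag l a = prod_diag l b"
proof -
  have bound: "(cmod (complex_of_real c * prod_entry k z w))\<^sup>2 \<le> prod_diag k a * prod_diag k b" if "k < n" for k
    using prod_entry_bound[OF that, of z w] swap[OF that] c by (simp add: norm_mult)
  define T where "T k = prod_diag k a + prod_diag k b - 2 * Re (complex_of_real c * prod_entry k z w)" for k
  have T_nonneg: "T k \<ge> 0" if "k < n" for k
    unfolding T_def using cross_term_le_sum(1)[OF prod_diag_nonneg prod_diag_nonneg bound] that by simp
  have "(\<Sum>k<n. p k * T k) = Re (mixture $$ (a, a)) + Re (mixture $$ (b, b)) - 2 * c * Re (mixture $$ (z, w))"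
    unfolding T_def Re_index_mixture_diag[OF idx(1)] Re_index_mixture_diag[OF idx(2)] Re_index_mixture[OF idx(3,4)]
    by (simp add: algebra_simps sum.distrib sum_subtractf sum_distrib_left)
  then have "(\<Sum>k<n. p k * T k) = 0"
    using balanced by simp
  moreover have "\<forall>k\<in>{..<n}. p k * T k \<ge> 0"
    using p_nonneg T_nonneg by simp
  ultimately have "p l * T l = 0"
    using l(1) sum_nonneg_eq_0_iff[of "{..<n}" "\<lambda>k. p k * T k"] by simp
  then have "T l = 0"
    using l(2) by simp
  then show ?thesis
    using cross_term_le_sum(2)[OF prod_diag_nonneg prod_diag_nonneg bound] l(1) unfolding T_def by simp
qed

end


text \<open>In a product decomposition of \<open>\<rho>\<close> every term has equal diagonal weights on basis vectors of
  equal Hamming weight, and on weights \<open>K\<close> and \<open>K + 1\<close> (the corner entry saturates the bound). Two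
  multiplicativity relations between products of diagonal entries then force weight \<open>K - 1\<close> to carry the
  same diagonal entries as weight \<open>K\<close>, whereas \<open>\<rho>\<close> has \<open>f 1 \<noteq> f 0\<close> there.\<close>

locale rho_product_mixture = dicke_edge_state K N Z \<sigma> f + product_mixture N n p r
  for K N :: nat and Z \<sigma> :: real and f :: "int \<Rightarrow> real" and n :: nat and p r +
  assumes rho_eq_mixture: "rho = mixture"
begin

lemma prod_diag_same_weight:
  assumes "a < 2 ^ N" "b < 2 ^ N" "num_ones N a = num_ones N b" "l < n" "p l > 0"
  shows "prod_diag l a = prod_diag l b"
proof (rule prod_diag_eq_of_balanced_entries[where c = 1 and z = a and w = b])
  show "Re (mixture $$ (a, a)) + Re (mixture $$ (b, b)) - 2 * 1 * Re (mixture $$ (a, b)) = 0"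
    using assms unfolding rho_eq_mixture[symmetric] by (simp add: index_rho)
qed (use assms in auto)

lemma prod_diag_K_eq_Suc_K:
  assumes "l < n" "p l > 0"
  shows "prod_diag l (block_index N K K 0) = prod_diag l (block_index N K 0 (K + 1))"
proof (rule prod_diag_eq_of_balanced_entries[where c = \<sigma> and z = "block_index N N 0 0" and w = "block_index N N N 0"])
  show "prod_diag k (block_index N N 0 0) * prod_diag k (block_index N N N 0)
      = prod_diag k (block_index N K K 0) * prod_diag k (block_index N K 0 (K + 1))" for k
  proof (rule prod_diag_mult_swap)
    fix q assume q: "q < N"
    then show "qbit (block_index N N 0 0) q = qbit (block_index N K K 0) q \<and> qbit (block_index N N N 0) q = qbit (block_index N K 0 (K + 1)) q
      \<or> qbit (block_index N N 0 0) q = qbit (block_index N K 0 (K + 1)) q \<and> qbit (block_index N N N 0) q = qbit (block_index N K K 0) q"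
      unfolding qbit_block_index[OF q] using N_eq by auto
  qed
  have "K \<le> N" "K + (K + 1) \<le> N"
    using N_eq by auto
  then show "Re (mixture $$ (block_index N K K 0, block_index N K K 0))
      + Re (mixture $$ (block_index N K 0 (K + 1), block_index N K 0 (K + 1)))
      - 2 * \<sigma> * Re (mixture $$ (block_index N N 0 0, block_index N N N 0)) = 0"
    unfolding rho_eq_mixture[symmetric] using N_pos f_0 f_minus_1 sigma_sq
    by (simp add: index_rho block_index_less num_ones_block_index rho_weight_def)
qed (use assms sigma in \<open>auto simp: block_index_less\<close>)

lemma prod_diag_K_minus_1_eq_K:
  assumes l: "l < n" "p l > 0"
  shows "prod_diag l (block_index N K (K - 1) 0) = prod_diag l (block_index N K K 0)"
proof -
  define D where "D = prod_diag l"
  define u where "u = block_index N K (K - 1) 0"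
  define x where "x = block_index N K K 0"
  define y where "y = block_index N K 0 (K + 1)"
  define x' where "x' = block_index N K (K - 1) 1"
  define xx where "xx = block_index N K K 1"
  define u' where "u' = block_index N K (K - 2) 0"
  define u'' where "u'' = block_index N (K - 1) (K - 2) 1"
  have KN: "K + 1 \<le> N" "K + (K + 1) \<le> N"
    using N_eq by auto
  have weights: "num_ones N u = K - 1" "num_ones N x = K" "num_ones N y = K + 1" "num_ones N x' = K"
    "num_ones N xx = K + 1" "num_ones N u'' = K - 1"
    unfolding u_def x_def y_def x'_def xx_def u''_def using KN K_gt_1 by (simp_all add: num_ones_block_index)
  have "D x' = D x" "D xx = D y" "D u'' = D u"
    unfolding D_def using prod_diag_same_weight[OF _ _ _ l] weights
    by (simp_all add: u_def x_def y_def x'_def xx_def u''_def block_index_less)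
  moreover have "D x = D y"
    unfolding D_def x_def y_def by (rule prod_diag_K_eq_Suc_K[OF l])
  moreover have "D u * D xx = D x * D x'"
    unfolding D_def
  proof (rule prod_diag_mult_swap)
    fix q assume q: "q < N"
    show "qbit u q = qbit x q \<and> qbit xx q = qbit x' q \<or> qbit u q = qbit x' q \<and> qbit xx q = qbit x q"
      unfolding u_def x_def xx_def x'_def qbit_block_index[OF q] using N_eq K_gt_1 by auto
  qed
  moreover have "D u' * D x = D u * D u''"
    unfolding D_def
  proof (rule prod_diag_mult_swap)
    fix q assume q: "q < N"
    show "qbit u' q = qbit u q \<and> qbit x q = qbit u'' q \<or> qbit u' q = qbit u'' q \<and> qbit x q = qbit u q"
      unfolding u_def x_def u'_def u''_def qbit_block_index[OF q] using N_eq K_gt_1 by auto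
  qed
  ultimately have "D u * D x = D x * D x" "D u' * D x = D u * D u"
    by simp_all
  then show ?thesis
    unfolding D_def[symmetric] u_def[symmetric] x_def[symmetric] by (cases "D x = 0") simp_all
qed

lemma rho_not_mixture: False
proof -
  define u where "u = block_index N K (K - 1) 0"
  define x where "x = block_index N K K 0"
  have "p l * prod_diag l u = p l * prod_diag l x" if "l < n" for l
    using prod_diag_K_minus_1_eq_K[OF that] p_nonneg[OF that] unfolding u_def x_def
    by (cases "p l > 0") auto
  then have "Re (mixture $$ (u, u)) = Re (mixture $$ (x, x))"
    unfolding Re_index_mixture_diag[OF block_index_less] u_def x_def by (intro sum.cong) auto
  moreover have "num_ones N u = K - 1" "num_ones N x = K"
    unfolding u_def x_def using N_eq by (simp_all add: num_ones_block_index)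
  moreover have "int K - int (K - 1) = 1"
    using K_gt_1 by simp
  ultimately show False
    unfolding rho_eq_mixture[symmetric] u_def x_def
    using scale_pos f_0 f_1 Z_pos by (simp add: index_rho block_index_less rho_weight_diag)
qed

end

lemma (in dicke_edge_state) not_fully_separable_rho: "\<not> fully_separable N rho"
proof
  assume "fully_separable N rho"
  then obtain n :: nat and p :: "nat \<Rightarrow> real" and r :: "nat \<Rightarrow> nat \<Rightarrow> complex mat" where "\<forall>l<n. p l \<ge> 0" "\<forall>l<n. \<forall>q<N. density 2 (r l q)"
    and "rho = msum (2 ^ N) (\<lambda>l. complex_of_real (p l) \<cdot>\<^sub>m tensor_qubits N (r l)) {..<n}"
    unfolding fully_separable_def by blast
  note decomposition = this
  interpret product_mixture N n p r
    using decomposition by unfold_locales (auto simp: density_def)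
  interpret rho_product_mixture K N Z \<sigma> f n p r
    using decomposition by unfold_locales (simp add: mixture_def)
  show False
    by (rule rho_not_mixture)
qed


section \<open>Ranks\<close>

context dicke_edge_state
begin

lemma rank_rho_le: "mrank (2 ^ N) rho \<le> N + 1"
proof -
  have "vec_space.rank (2 ^ N) rho \<le> card {0..N}"
  proof (rule rank_le_card_of_entries_sum_outer_products[OF rho_carrier,
        where fv = "\<lambda>k i. if num_ones N i = k then 1 else 0" and gv = "\<lambda>k j. complex_of_real (scale * rho_weight k (num_ones N j))"])
    fix i j :: nat assume ij: "i < 2 ^ N" "j < 2 ^ N"
    have "(\<Sum>k\<in>{0..N}. (if num_ones N i = k then 1 else 0) * complex_of_real (scale * rho_weight k (num_ones N j)))
        = (\<Sum>k\<in>{0..N}. if num_ones N i = k then complex_of_real (scale * rho_weight k (num_ones N j)) else 0)"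
      by (intro sum.cong) auto
    then show "rho $$ (i, j) = (\<Sum>k\<in>{0..N}. (if num_ones N i = k then 1 else 0) * complex_of_real (scale * rho_weight k (num_ones N j)))"
      using num_ones_le[of N i] ij by (simp add: index_rho)
  qed simp
  then show ?thesis
    unfolding mrank_def by simp
qed

lemma rho_weight_kernel_trivial:
  assumes row: "\<And>x. x \<le> N \<Longrightarrow> (\<Sum>k<N + 1. complex_of_real (scale * rho_weight x k) * c k) = 0"
  shows "\<forall>k<N + 1. c k = 0"
proof -
  have "c x = 0" if "0 < x" "x < N" for x
  proof -
    have "(\<Sum>k<N + 1. complex_of_real (scale * rho_weight x k) * c k) = complex_of_real (scale * rho_weight x x) * c x"
      by (rule sum_eq_single_term) (use that in \<open>auto simp: rho_weight_def\<close>)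
    moreover have "scale * f (int K - int x) \<noteq> 0"
      using scale_pos f_ge_1[of "int K - int x"] by simp
    ultimately show ?thesis
      using row[of x] that by (simp add: rho_weight_diag)
  qed
  moreover have "c 0 = 0 \<and> c N = 0"
  proof -
    define a where "a = f (int K)"
    have a: "a > 1" "f (int K - int N) = a"
      unfolding a_def using K_gt_1 f_gt_1[of "int K"] f_reflect_weight[of N] by simp_all
    have ends: "(\<Sum>k<N + 1. complex_of_real (scale * rho_weight x k) * c k)
        = complex_of_real (scale * rho_weight x 0) * c 0 + complex_of_real (scale * rho_weight x N) * c N"
      if "x = 0 \<or> x = N" for x
      by (rule sum_eq_two_terms) (use that N_pos in \<open>auto simp: rho_weight_def\<close>)
    have "complex_of_real scale * (complex_of_real a * c 0 + complex_of_real \<sigma> * c N) = 0"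
      using row[of 0] ends[of 0] N_pos unfolding a_def by (simp add: rho_weight_def algebra_simps)
    moreover have "complex_of_real scale * (complex_of_real \<sigma> * c 0 + complex_of_real a * c N) = 0"
      using row[of N] ends[of N] N_pos a(2) by (simp add: rho_weight_def algebra_simps)
    ultimately have "complex_of_real a * c 0 + complex_of_real \<sigma> * c N = 0"
      "complex_of_real \<sigma> * c 0 + complex_of_real a * c N = 0"
      using scale_pos by simp_all
    moreover have "complex_of_real a * complex_of_real a - complex_of_real \<sigma> * complex_of_real \<sigma> \<noteq> 0"
      using a(1) sigma_sq less_1_mult[OF a(1) a(1)] by (metis less_irrefl of_real_diff of_real_eq_0_iff of_real_mult
          right_minus_eq)
    ultimately show ?thesis
      by (rule linear_system_2_unique_solution)
  qed
  ultimately show ?thesis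
    by (metis less_Suc_eq less_Suc_eq_le Suc_eq_plus1 le_neq_implies_less not_gr0)
qed

lemma rank_rho: "mrank (2 ^ N) rho = N + 1"
proof (rule antisym[OF rank_rho_le])
  show "N + 1 \<le> mrank (2 ^ N) rho"
    unfolding mrank_def
  proof (rule rank_ge_of_kernel_trivial[OF rho_carrier block_index_less])
    fix c :: "nat \<Rightarrow> complex"
    assume kernel: "\<forall>i<2 ^ N. (\<Sum>k<N + 1. rho $$ (i, block_index N N k 0) * c k) = 0"
    show "\<forall>k<N + 1. c k = 0"
    proof (rule rho_weight_kernel_trivial)
      fix x assume "x \<le> N"
      then show "(\<Sum>k<N + 1. complex_of_real (scale * rho_weight x k) * c k) = 0"
        using kernel[rule_format, OF block_index_less[of N N x 0]]
        by (simp add: index_rho block_index_less num_ones_block_index_weight)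
    qed
  qed
qed

end


text \<open>The partial transpose \<open>\<rho>\<^sup>\<Gamma>\<^sub>m\<close> with respect to the first \<open>m\<close> qubits is block diagonal in the
  imbalance. Each of the \<open>N - 1\<close> inner classes carries the rank-two block \<open>cA a a\<^sup>T + cB b b\<^sup>T\<close>; the two
  extreme classes together carry the block \<open>[[f (K - m), \<sigma>], [\<sigma>, f (K - m)]]\<close>, of rank two unless
  \<open>m = K\<close>, where \<open>f 0 = 1\<close>.\<close>

locale partial_transpose_rank = dicke_edge_state +
  fixes m :: nat
  assumes m_pos: "1 \<le> m" and m_le_K: "m \<le> K"
begin

abbreviation rho_Gamma :: "complex mat" where
  "rho_Gamma \<equiv> ptrans N {..<m} rho"

abbreviation imb :: "nat \<Rightarrow> int" where
  "imb \<equiv> imbalance N {..<m}"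

lemma m_less_N: "m < N"
  using m_le_K N_eq by simp

lemma card_in_cut: "card_in N {..<m} = m"
  using m_less_N by (simp add: card_in_lessThan)

lemma index_rho_Gamma:
  assumes "i < 2 ^ N" "j < 2 ^ N"
  shows "rho_Gamma $$ (i, j) = complex_of_real (scale * ((if imb i = imb j
        then f (int K - int (ones_in N {..<m} j + ones_out N {..<m} i)) else 0)
      + \<sigma> * ((if imb i = - int m \<and> imb j = int N - int m then 1 else 0)
           + (if imb i = int N - int m \<and> imb j = - int m then 1 else 0))))"
  unfolding index_ptrans_rho[OF assms] rho_weight_ptrans card_in_cut ..

lemma imb_bounds: "- int m \<le> imb i \<and> imb i \<le> int N - int m"
  using imbalance_bounds[of N "{..<m}" i] unfolding card_in_cut .

lemma num_ones_of_imb_min: "imb i = - int m \<Longrightarrow> num_ones N i = m"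
  using imbalance_eq_min_iff[of N "{..<m}" i] num_ones_eq_ones_in_plus_out[of N i "{..<m}"]
  unfolding card_in_cut by simp

lemma num_ones_of_imb_max: "imb i = int N - int m \<Longrightarrow> num_ones N i = N - m"
  using imbalance_eq_max_iff[of N "{..<m}" i] num_ones_eq_ones_in_plus_out[of N i "{..<m}"]
  unfolding card_in_cut by simp

definition inner_classes :: "int set" where
  "inner_classes = {1 - int m .. int N - int m - 1}"

lemma finite_inner_classes: "finite inner_classes"
  unfolding inner_classes_def by simp

definition gram_part :: "(nat \<Rightarrow> real) \<Rightarrow> real \<Rightarrow> complex mat" where
  "gram_part w c = mat (2 ^ N) (2 ^ N) (\<lambda>(i, j). \<Sum>\<delta>\<in>inner_classes.
      (if imb i = \<delta> then complex_of_real (w (num_ones N i)) else 0)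
    * (if imb j = \<delta> then complex_of_real (scale * c * w (num_ones N j)) else 0))"

definition extreme_index :: "nat \<Rightarrow> nat \<Rightarrow> complex" where
  "extreme_index t i = (if imb i = (if t = 0 then - int m else int N - int m) then 1 else 0)"

definition extreme_left :: "nat \<Rightarrow> nat \<Rightarrow> complex" where
  "extreme_left t i = (if m = K then extreme_index 0 i + complex_of_real \<sigma> * extreme_index 1 i else extreme_index t i)"

definition extreme_right :: "nat \<Rightarrow> nat \<Rightarrow> complex" where
  "extreme_right t j = complex_of_real scale * (if m = K then extreme_index 0 j + complex_of_real \<sigma> * extreme_index 1 j
    else complex_of_real (f (int K - int m)) * extreme_index t j + complex_of_real \<sigma> * extreme_index (1 - t) j)"

definition extreme_terms :: "nat set" where
  "extreme_terms = (if m = K then {0} else {0, 1})"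

definition extreme_part :: "complex mat" where
  "extreme_part = mat (2 ^ N) (2 ^ N) (\<lambda>(i, j). \<Sum>t\<in>extreme_terms. extreme_left t i * extreme_right t j)"

lemma gram_part_carrier: "gram_part w c \<in> carrier_mat (2 ^ N) (2 ^ N)"
  unfolding gram_part_def by simp

lemma extreme_part_carrier: "extreme_part \<in> carrier_mat (2 ^ N) (2 ^ N)"
  unfolding extreme_part_def by simp

lemma index_gram_part:
  assumes "i < 2 ^ N" "j < 2 ^ N"
  shows "gram_part w c $$ (i, j) = (if imb i = imb j \<and> imb i \<in> inner_classes
      then complex_of_real (w (num_ones N i)) * complex_of_real (scale * c * w (num_ones N j)) else 0)"
  unfolding gram_part_def using assms by (simp add: sum_indicator_product[OF finite_inner_classes])

lemma index_extreme_part: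
  assumes "i < 2 ^ N" "j < 2 ^ N"
  shows "extreme_part $$ (i, j) = complex_of_real scale * (
      (if imb i = imb j \<and> imb i \<notin> inner_classes then complex_of_real (f (int K - int m)) else 0)
    + complex_of_real \<sigma> * ((if imb i = - int m \<and> imb j = int N - int m then 1 else 0)
         + (if imb i = int N - int m \<and> imb j = - int m then 1 else 0)))"
proof -
  have "- int m \<noteq> int N - int m"
    using N_pos by simp
  then show ?thesis
    using assms imb_bounds[of i] f_0 sigma_complex_sq
    unfolding extreme_part_def extreme_terms_def extreme_left_def extreme_right_def extreme_index_def inner_classes_def
    by (cases "m = K"; cases "imb i = - int m"; cases "imb i = int N - int m"; cases "imb j = - int m";
        cases "imb j = int N - int m") (simp_all add: algebra_simps)
qed

lemma rho_Gamma_decomposition: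
  "rho_Gamma = gram_part (\<lambda>k. exp (- (real k * mu))) cA + gram_part (\<lambda>k. exp (real k * mu)) cB + extreme_part"
proof (rule eq_matI)
  fix i j assume "i < dim_row (gram_part (\<lambda>k. exp (- (real k * mu))) cA + gram_part (\<lambda>k. exp (real k * mu)) cB + extreme_part)"
    "j < dim_col (gram_part (\<lambda>k. exp (- (real k * mu))) cA + gram_part (\<lambda>k. exp (real k * mu)) cB + extreme_part)"
  then have ij: "i < 2 ^ N" "j < 2 ^ N"
    unfolding gram_part_def extreme_part_def by auto
  define a where "a = exp (- (real (num_ones N i) * mu))"
  define a' where "a' = exp (- (real (num_ones N j) * mu))"
  define b where "b = exp (real (num_ones N i) * mu)"
  define b' where "b' = exp (real (num_ones N j) * mu)"
  note gram = index_gram_part[OF ij]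
  have entry: "rho_Gamma $$ (i, j) = complex_of_real (scale * (
      (if imb i = imb j then cA * a * a' + cB * b * b' else 0)
    + \<sigma> * ((if imb i = - int m \<and> imb j = int N - int m then 1 else 0)
         + (if imb i = int N - int m \<and> imb j = - int m then 1 else 0))))"
    unfolding index_ptrans_rho_split[OF ij] card_in_cut a_def a'_def b_def b'_def by (simp add: mult.assoc)
  have extreme_vals: "f (int K - int (N - m)) = f (int K - int m)" "cA * a * a' + cB * b * b' = f (int K - int m)"
    if "imb i = imb j" "imb i = - int m \<or> imb i = int N - int m"
    using that f_reflect_weight[of m] m_less_N f_as_exponentials_sq[of m] f_as_exponentials_sq[of "N - m"]
      num_ones_of_imb_min[of i] num_ones_of_imb_min[of j] num_ones_of_imb_max[of i] num_ones_of_imb_max[of j]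
    unfolding a_def a'_def b_def b'_def by (auto simp: power2_eq_square)
  have neq: "- int m \<noteq> int N - int m"
    using N_pos by simp
  note extreme = index_extreme_part[OF ij]
  have sum_entry: "(gram_part (\<lambda>k. exp (- (real k * mu))) cA + gram_part (\<lambda>k. exp (real k * mu)) cB + extreme_part) $$ (i, j)
      = gram_part (\<lambda>k. exp (- (real k * mu))) cA $$ (i, j) + gram_part (\<lambda>k. exp (real k * mu)) cB $$ (i, j)
        + extreme_part $$ (i, j)"
    using ij gram_part_carrier[of "\<lambda>k. exp (- (real k * mu))" cA] gram_part_carrier[of "\<lambda>k. exp (real k * mu)" cB]
      extreme_part_carrier by simp
  show "rho_Gamma $$ (i, j) = (gram_part (\<lambda>k. exp (- (real k * mu))) cA + gram_part (\<lambda>k. exp (real k * mu)) cB + extreme_part) $$ (i, j)"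
  proof -
    consider (inner) "imb i = imb j" "imb j \<in> inner_classes" | (different) "imb i \<noteq> imb j"
      | (low) "imb i = imb j" "imb j = - int m" | (high) "imb i = imb j" "imb j = int N - int m"
      using imb_bounds[of j] unfolding inner_classes_def by force
    then show ?thesis
    proof cases
      case inner
      then have "imb j \<noteq> - int m" "imb j \<noteq> int N - int m"
        unfolding inner_classes_def by auto
      with inner show ?thesis
        unfolding sum_entry entry extreme gram a_def a'_def b_def b'_def by (simp add: algebra_simps)
    next
      case different
      then show ?thesis
        unfolding sum_entry entry extreme gram by (simp add: algebra_simps)
    next
      case low
      moreover have "imb j \<notin> inner_classes"
        using low unfolding inner_classes_def by simp
      ultimately show ?thesis
        using extreme_vals neq unfolding sum_entry entry extreme gram by (simp add: algebra_simps)
    next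
      case high
      moreover have "imb i \<notin> inner_classes" "imb j \<notin> inner_classes"
        using high unfolding inner_classes_def by simp_all
      ultimately show ?thesis
        using extreme_vals neq unfolding sum_entry entry extreme gram by (simp add: algebra_simps)
    qed
  qed
qed (simp_all add: ptrans_def gram_part_def extreme_part_def)

lemma rank_rho_Gamma_le: "mrank (2 ^ N) rho_Gamma \<le> (if m = K then 2 * N - 1 else 2 * N)"
proof -
  have card_inner: "card inner_classes = N - 1"
    unfolding inner_classes_def using m_less_N by simp
  have gram: "vec_space.rank (2 ^ N) (gram_part w c) \<le> N - 1" for w c
    using rank_le_card_sum_outer_products[of inner_classes] card_inner
    unfolding gram_part_def inner_classes_def by simp
  have extreme: "vec_space.rank (2 ^ N) extreme_part \<le> card extreme_terms"
    unfolding extreme_part_def by (rule rank_le_card_sum_outer_products) (simp add: extreme_terms_def)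
  have carrier: "gram_part w c \<in> carrier_mat (2 ^ N) (2 ^ N)" "extreme_part \<in> carrier_mat (2 ^ N) (2 ^ N)" for w c
    unfolding gram_part_def extreme_part_def by auto
  define G1 where "G1 = gram_part (\<lambda>k. exp (- (real k * mu))) cA"
  define G2 where "G2 = gram_part (\<lambda>k. exp (real k * mu)) cB"
  have "vec_space.rank (2 ^ N) (G1 + G2 + extreme_part) \<le> vec_space.rank (2 ^ N) (G1 + G2) + vec_space.rank (2 ^ N) extreme_part"
    by (rule vec_space.rank_subadditive) (use carrier in \<open>auto simp: G1_def G2_def\<close>)
  moreover have "vec_space.rank (2 ^ N) (G1 + G2) \<le> vec_space.rank (2 ^ N) G1 + vec_space.rank (2 ^ N) G2"
    by (rule vec_space.rank_subadditive) (use carrier in \<open>auto simp: G1_def G2_def\<close>)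
  ultimately have "vec_space.rank (2 ^ N) rho_Gamma \<le> (N - 1) + (N - 1) + card extreme_terms"
    unfolding rho_Gamma_decomposition G1_def[symmetric] G2_def[symmetric]
    using gram[of "\<lambda>k. exp (- (real k * mu))" cA] gram[of "\<lambda>k. exp (real k * mu)" cB] extreme
    unfolding G1_def[symmetric] G2_def[symmetric] by linarith
  then show ?thesis
    unfolding mrank_def extreme_terms_def using N_pos by (auto split: if_splits)
qed

text \<open>Columns for the lower bound: two representatives of each inner class \<open>t - m\<close>
  (\<open>1 \<le> t \<le> N - 1\<close>) whose weights differ by two, so that their \<open>2 \<times> 2\<close> minor has the Casoratian
  \<open>Z\<close> of \<open>f\<close> as determinant, followed by the two extreme classes (only one of them when \<open>m = K\<close>).\<close>

definition low_in :: "nat \<Rightarrow> nat" where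
  "low_in t = (if m \<le> t then 0 else m - t)"

definition low_out :: "nat \<Rightarrow> nat" where
  "low_out t = (if m \<le> t then t - m else 0)"

definition low_rep :: "nat \<Rightarrow> nat" where
  "low_rep t = block_index N m (low_in t) (low_out t)"

definition high_rep :: "nat \<Rightarrow> nat" where
  "high_rep t = block_index N m (low_in t + 1) (low_out t + 1)"

definition extreme_lo :: nat where
  "extreme_lo = block_index N m m 0"

definition extreme_hi :: nat where
  "extreme_hi = block_index N m 0 (N - m)"

definition column :: "nat \<Rightarrow> nat" where
  "column k = (if k < N - 1 then low_rep (k + 1) else if k < 2 * N - 2 then high_rep (k + 2 - N)
    else if k = 2 * N - 2 then extreme_hi else extreme_lo)"

definition column_class :: "nat \<Rightarrow> nat" where
  "column_class k = (if k < N - 1 then k + 1 else if k < 2 * N - 2 then k + 2 - N else if k = 2 * N - 2 then N else 0)"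

definition column_count :: nat where
  "column_count = (if m = K then 2 * N - 1 else 2 * N)"

lemma column_less: "column k < 2 ^ N"
  unfolding column_def low_rep_def high_rep_def extreme_lo_def extreme_hi_def by (simp add: block_index_less)

lemma reps_valid:
  assumes "1 \<le> t" "t \<le> N - 1"
  shows "low_in t + 1 \<le> m" "m + (low_out t + 1) \<le> N"
  using assms m_less_N m_pos unfolding low_in_def low_out_def by auto

lemma ones_reps:
  assumes "1 \<le> t" "t \<le> N - 1"
  shows "ones_in N {..<m} (low_rep t) = low_in t" "ones_out N {..<m} (low_rep t) = low_out t"
    "ones_in N {..<m} (high_rep t) = low_in t + 1" "ones_out N {..<m} (high_rep t) = low_out t + 1"
  using reps_valid[OF assms] m_less_N unfolding low_rep_def high_rep_def
  by (simp_all add: ones_in_block_index ones_out_block_index)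

lemma imb_reps:
  assumes "1 \<le> t" "t \<le> N - 1"
  shows "imb (low_rep t) = int t - int m" "imb (high_rep t) = int t - int m"
  using reps_valid[OF assms] assms unfolding low_rep_def high_rep_def low_in_def low_out_def
  by (auto simp: imbalance_block_index)

lemma extremes_less: "extreme_lo < 2 ^ N" "extreme_hi < 2 ^ N"
  unfolding extreme_lo_def extreme_hi_def by (simp_all add: block_index_less)

lemma imb_extremes: "imb extreme_lo = - int m" "imb extreme_hi = int N - int m"
  unfolding extreme_lo_def extreme_hi_def using m_less_N by (simp_all add: imbalance_block_index)

lemma index_rho_Gamma_extremes:
  "rho_Gamma $$ (extreme_lo, extreme_lo) = complex_of_real (scale * f (int K - int m))"
  "rho_Gamma $$ (extreme_hi, extreme_hi) = complex_of_real (scale * f (int K - int m))"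
  "rho_Gamma $$ (extreme_lo, extreme_hi) = complex_of_real (scale * \<sigma>)"
  "rho_Gamma $$ (extreme_hi, extreme_lo) = complex_of_real (scale * \<sigma>)"
proof -
  have "ones_in N {..<m} extreme_lo = m" "ones_out N {..<m} extreme_lo = 0"
    "ones_in N {..<m} extreme_hi = 0" "ones_out N {..<m} extreme_hi = N - m"
    unfolding extreme_lo_def extreme_hi_def using m_less_N by (simp_all add: ones_in_block_index ones_out_block_index)
  then show "rho_Gamma $$ (extreme_lo, extreme_lo) = complex_of_real (scale * f (int K - int m))"
    "rho_Gamma $$ (extreme_hi, extreme_hi) = complex_of_real (scale * f (int K - int m))"
    "rho_Gamma $$ (extreme_lo, extreme_hi) = complex_of_real (scale * \<sigma>)"
    "rho_Gamma $$ (extreme_hi, extreme_lo) = complex_of_real (scale * \<sigma>)"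
    using index_rho_Gamma[OF extremes_less(1) extremes_less(1)] index_rho_Gamma[OF extremes_less(2) extremes_less(2)]
      index_rho_Gamma[OF extremes_less(1) extremes_less(2)] index_rho_Gamma[OF extremes_less(2) extremes_less(1)]
      imb_extremes f_reflect_weight[of m] m_less_N N_pos by simp_all
qed

lemma imb_column: "k < 2 * N \<Longrightarrow> imb (column k) = int (column_class k) - int m"
  using imb_reps[of "k + 1"] imb_reps[of "k + 2 - N"] imb_extremes N_pos
  unfolding column_def column_class_def by auto

lemma column_count_bounds: "2 * N - 1 \<le> column_count" "column_count \<le> 2 * N"
  unfolding column_count_def by auto

lemma column_inner:
  assumes "1 \<le> t" "t \<le> N - 1"
  shows "column (t - 1) = low_rep t" "column (t + N - 2) = high_rep t"
proof -
  have "\<not> t + N - 2 < N - 1" "t + N - 2 < 2 * N - 2" "t + N - 2 + 2 - N = t"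
    using assms N_ge_5 by auto
  then show "column (t - 1) = low_rep t" "column (t + N - 2) = high_rep t"
    unfolding column_def using assms by auto
qed

lemma row_sum_inner_class:
  assumes t: "1 \<le> t" "t \<le> N - 1" and i: "i < 2 ^ N" "imb i = int t - int m"
  shows "(\<Sum>k<column_count. rho_Gamma $$ (i, column k) * c k)
    = rho_Gamma $$ (i, low_rep t) * c (t - 1) + rho_Gamma $$ (i, high_rep t) * c (t + N - 2)"
proof -
  have "(\<Sum>k<column_count. rho_Gamma $$ (i, column k) * c k)
      = rho_Gamma $$ (i, column (t - 1)) * c (t - 1) + rho_Gamma $$ (i, column (t + N - 2)) * c (t + N - 2)"
  proof (rule sum_eq_two_terms)
    show "t - 1 < column_count" "t + N - 2 < column_count" "t - 1 \<noteq> t + N - 2"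
      using t column_count_bounds N_ge_5 by auto
    fix k assume k: "k < column_count" "k \<noteq> t - 1" "k \<noteq> t + N - 2"
    then have "column_class k \<noteq> t"
      using column_count_bounds t unfolding column_class_def by (auto split: if_splits)
    then have "imb (column k) \<noteq> imb i"
      using imb_column[of k] k column_count_bounds i by auto
    moreover have "int t - int m \<noteq> - int m" "int t - int m \<noteq> int N - int m"
      using t by auto
    ultimately show "rho_Gamma $$ (i, column k) * c k = 0"
      using index_rho_Gamma[OF i(1) column_less] i by auto
  qed
  then show ?thesis
    unfolding column_inner[OF t] .
qed

lemma kernel_inner_columns:
  assumes kernel: "\<forall>i<2 ^ N. (\<Sum>k<column_count. rho_Gamma $$ (i, column k) * c k) = 0"
    and t: "1 \<le> t" "t \<le> N - 1"
  shows "c (t - 1) = 0 \<and> c (t + N - 2) = 0"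
proof -
  define n0 where "n0 = int K - int (low_in t + low_out t)"
  have inner: "int t - int m \<noteq> - int m" "int t - int m \<noteq> int N - int m"
    using t by auto
  have less: "low_rep t < 2 ^ N" "high_rep t < 2 ^ N"
    unfolding low_rep_def high_rep_def by (simp_all add: block_index_less)
  note row = row_sum_inner_class[OF t less(1) imb_reps(1)[OF t], of c, symmetric, unfolded kernel[rule_format, OF less(1)]]
    row_sum_inner_class[OF t less(2) imb_reps(2)[OF t], of c, symmetric, unfolded kernel[rule_format, OF less(2)]]
  note entry = index_rho_Gamma[OF less(1) less(1)] index_rho_Gamma[OF less(1) less(2)]
    index_rho_Gamma[OF less(2) less(1)] index_rho_Gamma[OF less(2) less(2)]
  have "complex_of_real (scale * f n0) * c (t - 1) + complex_of_real (scale * f (n0 - 1)) * c (t + N - 2) = 0"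
    using row(1) entry imb_reps[OF t] ones_reps[OF t] inner unfolding n0_def by (simp add: algebra_simps)
  moreover have "complex_of_real (scale * f (n0 - 1)) * c (t - 1) + complex_of_real (scale * f (n0 - 2)) * c (t + N - 2) = 0"
    using row(2) entry imb_reps[OF t] ones_reps[OF t] inner unfolding n0_def by (simp add: algebra_simps)
  moreover have "complex_of_real (scale * f n0) * complex_of_real (scale * f (n0 - 2))
      - complex_of_real (scale * f (n0 - 1)) * complex_of_real (scale * f (n0 - 1)) \<noteq> 0"
  proof -
    have "(scale * f n0) * (scale * f (n0 - 2)) - (scale * f (n0 - 1)) * (scale * f (n0 - 1))
        = scale * scale * (f (n0 - 1 + 1) * f (n0 - 1 - 1) - f (n0 - 1) ^ 2)"
      by (simp add: algebra_simps power2_eq_square)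
    then have "(scale * f n0) * (scale * f (n0 - 2)) - (scale * f (n0 - 1)) * (scale * f (n0 - 1)) = scale * scale * Z"
      unfolding f_casoratian .
    then show ?thesis
      using scale_pos Z_pos by (metis mult_pos_pos of_real_diff of_real_eq_0_iff of_real_mult less_irrefl)
  qed
  ultimately show ?thesis
    by (rule linear_system_2_unique_solution)
qed

lemma rho_Gamma_extreme_row_inner_column:
  assumes "i < 2 ^ N" "imb i = - int m \<or> imb i = int N - int m" "k < 2 * N - 2"
  shows "rho_Gamma $$ (i, column k) = 0"
proof -
  have "1 \<le> column_class k" "column_class k \<le> N - 1"
    using assms N_ge_5 unfolding column_class_def by auto
  then have "imb (column k) \<noteq> - int m" "imb (column k) \<noteq> int N - int m"
    using imb_column[of k] assms by auto
  then show ?thesis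
    using index_rho_Gamma[OF assms(1) column_less] assms(2) by auto
qed

lemma column_extremes: "column (2 * N - 2) = extreme_hi" "column (2 * N - 1) = extreme_lo"
  unfolding column_def using N_ge_5 by auto

lemma kernel_extreme_columns_below_K:
  assumes kernel: "\<forall>i<2 ^ N. (\<Sum>k<column_count. rho_Gamma $$ (i, column k) * c k) = 0" and mK: "m < K"
  shows "c (2 * N - 1) = 0 \<and> c (2 * N - 2) = 0"
proof -
  define a where "a = f (int K - int m)"
  have a1: "a > 1"
    unfolding a_def using mK by (intro f_gt_1) auto
  have row: "(\<Sum>k<column_count. rho_Gamma $$ (i, column k) * c k)
      = rho_Gamma $$ (i, extreme_lo) * c (2 * N - 1) + rho_Gamma $$ (i, extreme_hi) * c (2 * N - 2)"
    if "i < 2 ^ N" "imb i = - int m \<or> imb i = int N - int m" for i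
    by (subst sum_eq_two_terms[of "2 * N - 1" _ "2 * N - 2"])
      (use that mK N_ge_5 rho_Gamma_extreme_row_inner_column column_extremes in \<open>auto simp: column_count_def\<close>)
  have "complex_of_real (scale * a) * c (2 * N - 1) + complex_of_real (scale * \<sigma>) * c (2 * N - 2) = 0"
    using kernel extremes_less row[OF extremes_less(1)] imb_extremes index_rho_Gamma_extremes unfolding a_def by simp
  moreover have "complex_of_real (scale * \<sigma>) * c (2 * N - 1) + complex_of_real (scale * a) * c (2 * N - 2) = 0"
    using kernel extremes_less row[OF extremes_less(2)] imb_extremes index_rho_Gamma_extremes unfolding a_def by simp
  moreover have "complex_of_real (scale * a) * complex_of_real (scale * a)
      - complex_of_real (scale * \<sigma>) * complex_of_real (scale * \<sigma>) \<noteq> 0"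
  proof -
    have "(scale * a) * (scale * a) - (scale * \<sigma>) * (scale * \<sigma>) \<noteq> 0"
      using scale_pos sigma_sq less_1_mult[OF a1 a1] by (simp add: algebra_simps)
    then show ?thesis
      by (metis of_real_diff of_real_eq_0_iff of_real_mult)
  qed
  ultimately show ?thesis
    by (rule linear_system_2_unique_solution)
qed

lemma kernel_extreme_columns_at_K:
  assumes kernel: "\<forall>i<2 ^ N. (\<Sum>k<column_count. rho_Gamma $$ (i, column k) * c k) = 0" and mK: "m = K"
  shows "c (2 * N - 2) = 0"
proof -
  have "column_count = 2 * N - 1"
    unfolding column_count_def using mK by simp
  then have "(\<Sum>k<column_count. rho_Gamma $$ (extreme_hi, column k) * c k)
      = rho_Gamma $$ (extreme_hi, column (2 * N - 2)) * c (2 * N - 2)"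
    by (intro sum_eq_single_term)
      (use N_ge_5 rho_Gamma_extreme_row_inner_column[OF extremes_less(2)] imb_extremes in auto)
  then have "complex_of_real (scale * f (int K - int m)) * c (2 * N - 2) = 0"
    using kernel extremes_less index_rho_Gamma_extremes column_extremes by simp
  then show ?thesis
    using mK f_0 scale_pos by simp
qed

lemma rank_rho_Gamma: "mrank (2 ^ N) rho_Gamma = column_count"
proof (rule antisym)
  show "mrank (2 ^ N) rho_Gamma \<le> column_count"
    using rank_rho_Gamma_le unfolding column_count_def .
  show "column_count \<le> mrank (2 ^ N) rho_Gamma"
    unfolding mrank_def
  proof (rule rank_ge_of_kernel_trivial[OF ptrans_carrier column_less])
    fix c :: "nat \<Rightarrow> complex"
    assume kernel: "\<forall>i<2 ^ N. (\<Sum>k<column_count. rho_Gamma $$ (i, column k) * c k) = 0"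
    show "\<forall>k<column_count. c k = 0"
    proof (intro allI impI)
      fix k assume k: "k < column_count"
      consider "k < N - 1" | "N - 1 \<le> k" "k < 2 * N - 2" | "k = 2 * N - 2" | "k = 2 * N - 1"
        using k column_count_bounds by linarith
      then show "c k = 0"
      proof cases
        case 1
        then show ?thesis using kernel_inner_columns[OF kernel, of "k + 1"] by simp
      next
        case 2
        then show ?thesis using kernel_inner_columns[OF kernel, of "k + 2 - N"] N_ge_5 by simp
      next
        case 3
        then show ?thesis
          using kernel_extreme_columns_below_K[OF kernel] kernel_extreme_columns_at_K[OF kernel] m_le_K
          by (cases "m = K") auto
      next
        case 4
        then have "m < K"
          using k m_le_K unfolding column_count_def by (auto split: if_splits)
        then show ?thesis using kernel_extreme_columns_below_K[OF kernel] 4 by simp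
      qed
    qed
  qed
qed

end


theorem theorem7:
  fixes K N :: nat and Z :: real and \<sigma> :: real and f :: "int \<Rightarrow> real"
    and d od \<rho> :: "complex mat"
  assumes "K > 1" and "N = 2 * K + 1" and "Z > 0" and "\<sigma> \<in> {1, -1}"
    and "f 0 = 1" and "f 1 = 1 + Z" and "\<forall>k. f (k + 2) = (2 + Z) * f (k + 1) - f k"
    and "d = msum (2 ^ N) (\<lambda>k. complex_of_real (real (N choose k) * f (int K - int k))
                 \<cdot>\<^sub>m ketbra (dicke N k) (dicke N k)) {0..N}"
    and "od = complex_of_real \<sigma> \<cdot>\<^sub>m (ketbra (dicke N 0) (dicke N N) + ketbra (dicke N N) (dicke N 0))"
    and "\<rho> = complex_of_real (1 / (2 * (4 + Z) ^ K)) \<cdot>\<^sub>m (d + od)"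
  shows "density (2 ^ N) \<rho> \<and> ppt_all N \<rho>
    \<and> mrank (2 ^ N) \<rho> = N + 1
    \<and> (\<forall>m. 1 \<le> m \<and> m < K \<longrightarrow> mrank (2 ^ N) (ptrans N {..<m} \<rho>) = 2 * N)
    \<and> mrank (2 ^ N) (ptrans N {..<K} \<rho>) = 2 * N - 1
    \<and> extreme_point_mat \<rho> (ppt_states N)
    \<and> \<not> fully_separable N \<rho>"
proof -
  interpret dicke_edge_state K N Z \<sigma> f
    by unfold_locales (use assms(1-7) in auto)
  have \<rho>: "\<rho> = rho"
    unfolding assms(8-10) rho_def diag_part_def corner_part_def ..
  have rank_Gamma: "mrank (2 ^ N) (ptrans N {..<m} rho) = (if m = K then 2 * N - 1 else 2 * N)"
    if "1 \<le> m" "m \<le> K" for m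
  proof -
    interpret partial_transpose_rank K N Z \<sigma> f m
      by unfold_locales (use that in auto)
    show ?thesis
      using rank_rho_Gamma unfolding column_count_def .
  qed
  show ?thesis
    unfolding \<rho> using density_rho ppt_all_rho rank_rho rank_Gamma[of K] rank_Gamma assms(1)
      extreme_point_rho not_fully_separable_rho by auto
qed

end
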